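(* The algorithm $\mathcal{U}$ described in the context is linearizable with respect to $\mathcal{T}$: every history $H$ of $\mathcal{U}$ has a completion $H'$ and a linearization of $H'$ that conforms to $\mathcal{T}$.
   Context: Model: an asynchronous shared-memory system with possibly infinitely many processes, any of which may crash, communicating via atomic shared objects. A fetch-and-increment (F\&I) object stores an integer; F\&I$(C)$ atomically returns the current value and increments it. A generalized-compare-and-swap (GCAS) object $O$ stores a value and supports Read$(O)$ and GCAS$(c, O, v_1, v_2)$, which atomically does: if $c(\text{current value of } O, v_1)$ holds then set $O := v_2$ and return true, else return false. Tuples are compared componentwise for $=$; GCAS$(>, A, (t,-,-), v)$ succeeds iff the time field of $A$ is strictly greater than $t$. Implemented type $\mathcal{T} = (OP, RES, Q, \delta)$ with $\delta \subseteq Q\times OP\times Q\times RES$ and initial state $s_0$; a procedure $apply_{\mathcal{T}}(o,s)$ returns some $(s',r)$ with $(s,o,s',r)\in\delta$. $NULL$ is a value different from every response of $\mathcal{T}$, and $NOOP$ is a name different from every operation of $\mathcal{T}$. Algorithm $\mathcal{U}$: each process $p$ owns a GCAS object $H_p$ with fields $(time, response)$. Shared objects: F\&I object $C$, initially $1$; GCAS object $A$ with fields $(time, op, ptr)$, initially $(0, NOOP, h(NOOP))$, where $h(NOOP)$ is a pointer to an immutable location containing $(0,\perp)$; GCAS object $S$ with fields $(time, state, response, ptr)$, initially $(0, s_0, \perp, h(NOOP))$. Process $p$ performs operation $o$ by calling DoOp$(o)$: (1) DoOp$(o)$ invoked; (2) $t := $ F\&I$(C)$; (3) $H_p := (t,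 NULL)$; (4) while $H_p = (t, NULL)$ do: (5) $(t^*, s^*, r^*, roptr^* ) := S$; (6) GCAS$(=, *roptr^*, (t^*, NULL), (t^*, r^* ))$; (7) GCAS$(>, A, (t,-,-), (t, o, \&H_p))$; (8) $(t', o', roptr') := A$; (9) $(\hat t, \hat r) := *roptr'$; (10) if $(\hat t,\hat r) = (t', NULL)$ then (11) $(s', r') := apply_{\mathcal{T}}(o', s^* )$; (12) GCAS$(=, S, (t^*,s^*,r^*,roptr^* ), (t', s', r', roptr'))$; (13) else GCAS$(=, A, (t', o', roptr'), (t, o, \&H_p))$; end while; (14) return $H_p.response$. Lines 1 and 14 are the invocation and response steps. Linearizability: a history is the subsequence of invocation/response steps of an execution; an operation execution is complete if its response appears, pending otherwise. A completion $H'$ of $H$ removes some pending invocations and adds responses to all others so every operation is complete. A linearization of a complete history assigns each operation a distinct point within its invocation–response interval; it conforms to $\mathcal{T}$ if the responses are those obtained by applying the operations sequentially in that order starting from $s_0$ according to $\delta$. *)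

theory Defs
  imports Complex_Main
begin

text \<open>Values stored in response fields: NULL, the initial bottom value, or a genuine
  response of the implemented type.\<close>
datatype 'r rval = Null | Bot | Resp 'r

datatype 'o aop = NOOP | Op 'o

text \<open>Pointers stored in A and S: h(NOOP) (immutable location containing (0,Bot)),
  or the address of H_p of process p.\<close>
datatype 'p ptr = HNoop | HP 'p

text \<open>Local state of a process: program counter (0 = not executing DoOp, otherwise the
  line number about to be executed) and the local variables of DoOp.\<close>
record ('p,'o,'r,'s) loc =
  l_pc :: nat
  l_op :: 'o
  l_t :: nat
  l_ts :: nat
  l_ss :: 's
  l_rs :: "'r rval"
  l_ps :: "'p ptr"
  l_t1 :: nat
  l_o1 :: "'o aop"
  l_p1 :: "'p ptr"
  l_s1 :: 's
  l_r1 :: "'r rval"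

record ('p,'o,'r,'s) conf =
  cC :: nat
  cA :: "nat \<times> 'o aop \<times> 'p ptr"
  cS :: "nat \<times> 's \<times> 'r rval \<times> 'p ptr"
  cH :: "'p \<Rightarrow> nat \<times> 'r rval"
  cL :: "'p \<Rightarrow> ('p,'o,'r,'s) loc"

datatype ('p,'o,'r) event = Inv 'p 'o | Res 'p "'r rval"

fun ev_proc :: "('p,'o,'r) event \<Rightarrow> 'p" where
  "ev_proc (Inv p _) = p" | "ev_proc (Res p _) = p"

fun is_inv :: "('p,'o,'r) event \<Rightarrow> bool" where
  "is_inv (Inv _ _) = True" | "is_inv (Res _ _) = False"

definition updL :: "('p,'o,'r,'s) conf \<Rightarrow> 'p \<Rightarrow> (('p,'o,'r,'s) loc \<Rightarrow> ('p,'o,'r,'s) loc)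
    \<Rightarrow> ('p,'o,'r,'s) conf" where
  "updL c p f = c\<lparr>cL := (cL c)(p := f (cL c p))\<rparr>"

definition deref :: "('p,'o,'r,'s) conf \<Rightarrow> 'p ptr \<Rightarrow> nat \<times> 'r rval" where
  "deref c x = (case x of HNoop \<Rightarrow> (0, Bot) | HP q \<Rightarrow> cH c q)"

text \<open>GCAS(=, *x, old, new) on the location pointed to by x (h(NOOP) is immutable).\<close>
definition gcas_ptr :: "('p,'o,'r,'s) conf \<Rightarrow> 'p ptr \<Rightarrow> nat \<times> 'r rval \<Rightarrow> nat \<times> 'r rval
    \<Rightarrow> 'p \<Rightarrow> nat \<times> 'r rval" where
  "gcas_ptr c x old new = (case x of HNoop \<Rightarrow> cH c
      | HP q \<Rightarrow> (if cH c q = old then (cH c)(q := new) else cH c))"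

text \<open>ustep delta c p e c': process p takes one atomic step from c to c', producing the
  history event e (None for internal steps). apply_T may return any (s',r) allowed by delta.\<close>
inductive ustep :: "('s \<times> 'o \<times> 's \<times> 'r) set \<Rightarrow> ('p,'o,'r,'s) conf \<Rightarrow> 'p
    \<Rightarrow> ('p,'o,'r) event option \<Rightarrow> ('p,'o,'r,'s) conf \<Rightarrow> bool"
  for \<delta> where
  line1: "l_pc (cL c p) = 0 \<Longrightarrow>
     ustep \<delta> c p (Some (Inv p oo)) (updL c p (\<lambda>l. l\<lparr>l_pc := 2, l_op := oo\<rparr>))"
| line2: "l_pc (cL c p) = 2 \<Longrightarrow>
     ustep \<delta> c p None (updL (c\<lparr>cC := cC c + 1\<rparr>) p (\<lambda>l. l\<lparr>l_pc := 3, l_t := cC c\<rparr>))"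
| line3: "l_pc (cL c p) = 3 \<Longrightarrow>
     ustep \<delta> c p None
       (updL (c\<lparr>cH := (cH c)(p := (l_t (cL c p), Null))\<rparr>) p (\<lambda>l. l\<lparr>l_pc := 4\<rparr>))"
| line4: "l_pc (cL c p) = 4 \<Longrightarrow>
     ustep \<delta> c p None
       (updL c p (\<lambda>l. l\<lparr>l_pc := (if cH c p = (l_t l, Null) then 5 else 14)\<rparr>))"
| line5: "l_pc (cL c p) = 5 \<Longrightarrow> cS c = (t, s, r, x) \<Longrightarrow>
     ustep \<delta> c p None
       (updL c p (\<lambda>l. l\<lparr>l_pc := 6, l_ts := t, l_ss := s, l_rs := r, l_ps := x\<rparr>))"
| line6: "l_pc (cL c p) = 6 \<Longrightarrow> l = cL c p \<Longrightarrow>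
     ustep \<delta> c p None
       (updL (c\<lparr>cH := gcas_ptr c (l_ps l) (l_ts l, Null) (l_ts l, l_rs l)\<rparr>) p
          (\<lambda>l. l\<lparr>l_pc := 7\<rparr>))"
| line7: "l_pc (cL c p) = 7 \<Longrightarrow> l = cL c p \<Longrightarrow>
     ustep \<delta> c p None
       (updL (c\<lparr>cA := (if fst (cA c) > l_t l then (l_t l, Op (l_op l), HP p) else cA c)\<rparr>) p
          (\<lambda>l. l\<lparr>l_pc := 8\<rparr>))"
| line8: "l_pc (cL c p) = 8 \<Longrightarrow> cA c = (t, oo, x) \<Longrightarrow>
     ustep \<delta> c p None (updL c p (\<lambda>l. l\<lparr>l_pc := 9, l_t1 := t, l_o1 := oo, l_p1 := x\<rparr>))"
| line9_10: "l_pc (cL c p) = 9 \<Longrightarrow>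
     ustep \<delta> c p None
       (updL c p (\<lambda>l. l\<lparr>l_pc := (if deref c (l_p1 l) = (l_t1 l, Null) then 11 else 13)\<rparr>))"
| line11: "l_pc (cL c p) = 11 \<Longrightarrow> l_o1 (cL c p) = Op oo \<Longrightarrow>
     (l_ss (cL c p), oo, s', r') \<in> \<delta> \<Longrightarrow>
     ustep \<delta> c p None (updL c p (\<lambda>l. l\<lparr>l_pc := 12, l_s1 := s', l_r1 := Resp r'\<rparr>))"
| line12: "l_pc (cL c p) = 12 \<Longrightarrow> l = cL c p \<Longrightarrow>
     ustep \<delta> c p None
       (updL (c\<lparr>cS := (if cS c = (l_ts l, l_ss l, l_rs l, l_ps l)
                         then (l_t1 l, l_s1 l, l_r1 l, l_p1 l) else cS c)\<rparr>) p
          (\<lambda>l. l\<lparr>l_pc := 4\<rparr>))"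
| line13: "l_pc (cL c p) = 13 \<Longrightarrow> l = cL c p \<Longrightarrow>
     ustep \<delta> c p None
       (updL (c\<lparr>cA := (if cA c = (l_t1 l, l_o1 l, l_p1 l)
                         then (l_t l, Op (l_op l), HP p) else cA c)\<rparr>) p
          (\<lambda>l. l\<lparr>l_pc := 4\<rparr>))"
| line14: "l_pc (cL c p) = 14 \<Longrightarrow>
     ustep \<delta> c p (Some (Res p (snd (cH c p)))) (updL c p (\<lambda>l. l\<lparr>l_pc := 0\<rparr>))"

text \<open>Initial configurations (the initial contents of the H_p are unspecified).\<close>
definition init_conf :: "'s \<Rightarrow> ('p,'o,'r,'s) conf \<Rightarrow> bool" where
  "init_conf s0 c \<longleftrightarrow> cC c = 1 \<and> cA c = (0, NOOP, HNoop) \<and> cS c = (0, s0, Bot, HNoop)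
     \<and> (\<forall>p. l_pc (cL c p) = 0)"

text \<open>Crashed processes
  simply take no further steps; the scheduling is arbitrary.\<close>
inductive uexec :: "('s \<times> 'o \<times> 's \<times> 'r) set \<Rightarrow> ('p,'o,'r,'s) conf
    \<Rightarrow> ('p,'o,'r) event option list \<Rightarrow> ('p,'o,'r,'s) conf \<Rightarrow> bool"
  for \<delta> where
  nil: "uexec \<delta> c [] c"
| snoc: "uexec \<delta> c0 tr c \<Longrightarrow> ustep \<delta> c p e c' \<Longrightarrow> uexec \<delta> c0 (tr @ [e]) c'"

definition history :: "('p,'o,'r) event option list \<Rightarrow> ('p,'o,'r) event list" where
  "history tr = List.map_filter (\<lambda>x. x) tr"

definition proj :: "'p \<Rightarrow> ('p,'o,'r) event list \<Rightarrow> ('p,'o,'r) event list" where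
  "proj p h = filter (\<lambda>e. ev_proc e = p) h"

definition wf_hist :: "('p,'o,'r) event list \<Rightarrow> bool" where
  "wf_hist h \<longleftrightarrow> (\<forall>p. \<forall>i < length (proj p h). is_inv (proj p h ! i) \<longleftrightarrow> even i)"

definition complete_hist :: "('p,'o,'r) event list \<Rightarrow> bool" where
  "complete_hist h \<longleftrightarrow> wf_hist h \<and> (\<forall>p. even (length (proj p h)))"

definition pending :: "('p,'o,'r) event list \<Rightarrow> nat \<Rightarrow> bool" where
  "pending h i \<longleftrightarrow> i < length h \<and> is_inv (h ! i)
     \<and> (\<forall>j. i < j \<and> j < length h \<longrightarrow> ev_proc (h ! j) \<noteq> ev_proc (h ! i))"

definition is_completion :: "('p,'o,'r) event list \<Rightarrow> ('p,'o,'r) event list \<Rightarrow> bool" where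
  "is_completion h h' \<longleftrightarrow> (\<exists>D ext.
      (\<forall>i\<in>D. pending h i) \<and> (\<forall>e\<in>set ext. \<not> is_inv e)
      \<and> h' = map (\<lambda>i. h ! i) (filter (\<lambda>i. i \<notin> D) [0..<length h]) @ ext
      \<and> complete_hist h')"

definition matching :: "('p,'o,'r) event list \<Rightarrow> nat \<Rightarrow> nat \<Rightarrow> bool" where
  "matching h i j \<longleftrightarrow> i < j \<and> j < length h \<and> is_inv (h ! i) \<and> \<not> is_inv (h ! j)
     \<and> ev_proc (h ! j) = ev_proc (h ! i)
     \<and> (\<forall>k. i < k \<and> k < j \<longrightarrow> ev_proc (h ! k) \<noteq> ev_proc (h ! i))"

text \<open>Operations of a complete history are identified by their invocation positions.\<close>
definition ops :: "('p,'o,'r) event list \<Rightarrow> nat set" where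
  "ops h = {i. i < length h \<and> is_inv (h ! i)}"

definition inv_op :: "('p,'o,'r) event \<Rightarrow> 'o" where
  "inv_op e = (case e of Inv _ oo \<Rightarrow> oo)"

definition res_val :: "('p,'o,'r) event \<Rightarrow> 'r rval" where
  "res_val e = (case e of Res _ v \<Rightarrow> v)"

definition linearization :: "('p,'o,'r) event list \<Rightarrow> (nat \<Rightarrow> real) \<Rightarrow> bool" where
  "linearization h pt \<longleftrightarrow> inj_on pt (ops h)
     \<and> (\<forall>i\<in>ops h. \<forall>j. matching h i j \<longrightarrow> real i \<le> pt i \<and> pt i \<le> real j)"

definition conforms :: "('s \<times> 'o \<times> 's \<times> 'r) set \<Rightarrow> 's \<Rightarrow> ('p,'o,'r) event list
    \<Rightarrow> (nat \<Rightarrow> real) \<Rightarrow> bool" where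
  "conforms \<delta> s0 h pt \<longleftrightarrow> (\<exists>ord sts.
      distinct ord \<and> set ord = ops h \<and> sorted_wrt (\<lambda>a b. pt a < pt b) ord
      \<and> length sts = Suc (length ord) \<and> sts ! 0 = s0
      \<and> (\<forall>k < length ord. \<exists>j r. matching h (ord ! k) j \<and> res_val (h ! j) = Resp r
             \<and> (sts ! k, inv_op (h ! (ord ! k)), sts ! Suc k, r) \<in> \<delta>))"

end

theory Submission
  imports Defs
begin

text \<open>Each DoOp draws a ticket t from C; a ghost map tm binds every issued ticket to the
  position of its invocation in the history. A ghost log records, in order, every successful
  GCAS on S (line 12): the ticket of the operation installed, its owner, the history length at
  that moment, the response and the new state. The invariant shows that the log is a sequential
  execution of the type from s0 in which no ticket occurs twice (an announcement in A is applied
  only while H of its owner still holds (t, NULL), and the response of the previous entry is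
  always written back before S moves on), and that every response returned is the logged one.
  From such a log the history is completed by dropping the pending invocations that were never
  applied and appending the logged responses of the others; each operation is linearized just
  before the event following the GCAS that installed it.\<close>

lemma proj_append [simp]: "proj p (xs @ ys) = proj p xs @ proj p ys"
  by (simp add: proj_def)

lemma proj_Nil [simp]: "proj p [] = []"
  by (simp add: proj_def)

lemma proj_single: "proj p [e] = (if ev_proc e = p then [e] else [])"
  by (simp add: proj_def)

lemma proj_map_nth: "proj p (map (nth h) xs) = map (nth h) (filter (\<lambda>i. ev_proc (h!i) = p) xs)"
  by (simp add: proj_def filter_map o_def)

lemma take_map_nth: "c \<le> length h \<Longrightarrow> take c h = map (nth h) [0..<c]"
  by (simp add: list_eq_iff_nth_eq)

lemma proj_take: "c \<le> length h \<Longrightarrow> proj p (take c h) = map (nth h) (filter (\<lambda>i. ev_proc (h!i) = p) [0..<c])"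
  by (metis proj_map_nth take_map_nth)

lemma wf_hist_snoc:
  "wf_hist (h @ [e]) \<longleftrightarrow> wf_hist h \<and> (is_inv e \<longleftrightarrow> even (length (proj (ev_proc e) h)))"
proof
  assume A: "wf_hist (h @ [e])"
  have "wf_hist h"
    unfolding wf_hist_def
  proof (intro allI impI)
    fix p i assume i: "i < length (proj p h)"
    from A have "is_inv (proj p (h@[e]) ! i) \<longleftrightarrow> even i"
      unfolding wf_hist_def using i by (simp add: proj_single)
    thus "is_inv (proj p h ! i) \<longleftrightarrow> even i" using i by (simp add: proj_single nth_append)
  qed
  moreover have "is_inv e \<longleftrightarrow> even (length (proj (ev_proc e) h))"
    using A[unfolded wf_hist_def, THEN spec[of _ "ev_proc e"], THEN spec[of _ "length (proj (ev_proc e) h)"]]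
    by (simp add: proj_single)
  ultimately show "wf_hist h \<and> (is_inv e \<longleftrightarrow> even (length (proj (ev_proc e) h)))" by blast
next
  assume B: "wf_hist h \<and> (is_inv e \<longleftrightarrow> even (length (proj (ev_proc e) h)))"
  show "wf_hist (h @ [e])"
    unfolding wf_hist_def
  proof (intro allI impI)
    fix p i assume i: "i < length (proj p (h @ [e]))"
    show "is_inv (proj p (h @ [e]) ! i) \<longleftrightarrow> even i"
    proof (cases "i < length (proj p h)")
      case True
      then show ?thesis using B unfolding wf_hist_def by (simp add: nth_append)
    next
      case False
      then have "ev_proc e = p" "i = length (proj p h)" using i by (auto simp: proj_single split: if_splits)
      then show ?thesis using B by (simp add: proj_single)
    qed
  qed
qed

lemma wf_hist_iff:
  "wf_hist h \<longleftrightarrow> (\<forall>i<length h. is_inv (h!i) \<longleftrightarrow> even (length (proj (ev_proc (h!i)) (take i h))))"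
proof (induction h rule: rev_induct)
  case Nil
  then show ?case by (simp add: wf_hist_def)
next
  case (snoc e h)
  show ?case unfolding wf_hist_snoc snoc.IH
    by (auto simp: nth_append less_Suc_eq)
qed

lemma pending_snoc:
  "pending (h @ [e]) a \<longleftrightarrow> (a = length h \<and> is_inv e) \<or> (pending h a \<and> ev_proc e \<noteq> ev_proc (h!a))"
  unfolding pending_def
  by (auto simp: nth_append less_Suc_eq)

lemma matching_snoc:
  "matching (h @ [e]) a b \<longleftrightarrow> matching h a b \<or>
     (b = length h \<and> pending h a \<and> \<not> is_inv e \<and> ev_proc e = ev_proc (h!a))"
  unfolding matching_def pending_def
  by (auto simp: nth_append less_Suc_eq)

lemma matching_unique: "matching h a j \<Longrightarrow> matching h a j' \<Longrightarrow> j = j'"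
  unfolding matching_def by (metis linorder_neqE_nat)

lemma pending_unique: "pending h a \<Longrightarrow> pending h b \<Longrightarrow> ev_proc (h!a) = ev_proc (h!b) \<Longrightarrow> a = b"
  unfolding pending_def by (metis linorder_neqE_nat)

lemma pending_no_later_event: "pending h a \<Longrightarrow> a < c \<Longrightarrow> c < length h \<Longrightarrow> ev_proc (h!c) \<noteq> ev_proc (h!a)"
  unfolding pending_def by auto

lemma pending_odd_proj: "wf_hist h \<Longrightarrow> pending h a \<Longrightarrow> odd (length (proj (ev_proc (h!a)) h))"
proof -
  assume wf: "wf_hist h" and pa: "pending h a"
  let ?p = "ev_proc (h!a)"
  have al: "a < length h" "is_inv (h!a)" using pa unfolding pending_def by auto
  have "h = take a h @ [h!a] @ drop (Suc a) h" using al id_take_nth_drop by simp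
  moreover have "proj ?p (drop (Suc a) h) = []"
    unfolding proj_def filter_empty_conv
  proof
    fix x assume "x \<in> set (drop (Suc a) h)"
    then obtain k where "k < length (drop (Suc a) h)" "x = drop (Suc a) h ! k" by (metis in_set_conv_nth)
    hence "x = h ! (Suc a + k)" "Suc a + k < length h" by auto
    thus "ev_proc x \<noteq> ?p" using pending_no_later_event[OF pa] by simp
  qed
  ultimately have "length (proj ?p h) = Suc (length (proj ?p (take a h)))"
    by (metis append_Nil2 length_append_singleton proj_append proj_single)
  moreover have "even (length (proj ?p (take a h)))" using wf al unfolding wf_hist_iff by blast
  ultimately show ?thesis by simp
qed

lemma wf_hist_pending_or_even:
  "wf_hist h \<Longrightarrow> (\<exists>a. pending h a \<and> ev_proc (h!a) = p) \<or> even (length (proj p h))"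
proof (induction h rule: rev_induct)
  case (snoc e h)
  then have wf: "wf_hist h" and e: "is_inv e \<longleftrightarrow> even (length (proj (ev_proc e) h))"
    by (simp_all add: wf_hist_snoc)
  show ?case
  proof (cases "ev_proc e = p")
    case True
    then show ?thesis using e by (cases "is_inv e") (auto simp: pending_snoc proj_single)
  next
    case False
    then show ?thesis using snoc.IH[OF wf] by (auto simp: pending_snoc proj_single nth_append pending_def)
  qed
qed simp

lemma wf_hist_pending_or_matched:
  assumes "wf_hist h" "a < length h" "is_inv (h!a)"
  shows "pending h a \<or> (\<exists>b. matching h a b)"
  using assms
proof (induction h rule: rev_induct)
  case (snoc e h)
  then have wf: "wf_hist h" and e: "is_inv e \<longleftrightarrow> even (length (proj (ev_proc e) h))"
    by (simp_all add: wf_hist_snoc)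
  show ?case
  proof (cases "a = length h")
    case True
    then show ?thesis using snoc.prems by (simp add: pending_snoc)
  next
    case False
    then have a: "a < length h" "is_inv (h!a)" using snoc.prems by (auto simp: nth_append)
    have "pending (h @ [e]) a \<or> (\<exists>b. matching (h @ [e]) a b)" if "pending h a"
      using that e pending_odd_proj[OF wf that] by (auto simp: pending_snoc matching_snoc)
    then show ?thesis using snoc.IH[OF wf a] by (auto simp: matching_snoc)
  qed
qed simp

text \<open>An abstract sequential log for a history h: its i-th entry says that the operation
  invoked at position as!i took effect, with response rs!i, moving the state from sts!i to
  sts!(i+1), before position ns!i of h.\<close>
locale log_linearizable =
  fixes h :: "('p,'o,'r) event list" and as ns :: "nat list" and rs :: "'r list"
    and sts :: "'s list" and \<delta> :: "('s \<times> 'o \<times> 's \<times> 'r) set" and s0 :: 's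
  assumes wf: "wf_hist h"
    and length_sts: "length sts = Suc (length as)"
    and distinct_as: "distinct as"
    and log_entries: "\<forall>i<length as. as!i < ns!i \<and> ns!i \<le> length h \<and> is_inv (h!(as!i))"
    and ns_mono: "\<forall>i j. i \<le> j \<longrightarrow> j < length as \<longrightarrow> ns!i \<le> ns!j"
    and sts_0: "sts!0 = s0"
    and log_steps: "\<forall>i<length as. (sts!i, inv_op (h!(as!i)), sts!Suc i, rs!i) \<in> \<delta>"
    and responses_logged: "\<forall>a b. matching h a b \<longrightarrow> (\<exists>i<length as. as!i = a \<and> ns!i \<le> b \<and> res_val (h!b) = Resp (rs!i))"
begin

definition dropped :: "nat set" where
  "dropped = {a. pending h a \<and> a \<notin> set as}"

definition kept :: "nat list" where
  "kept = filter (\<lambda>i. i \<notin> dropped) [0..<length h]"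

text \<open>The position in the completed history of position n of h (if n is kept).\<close>
definition rank :: "nat \<Rightarrow> nat" where
  "rank n = length (filter (\<lambda>i. i \<notin> dropped) [0..<n])"

definition kept_events :: "('p,'o,'r) event list" where
  "kept_events = map (nth h) kept"

definition open_ops :: "nat list" where
  "open_ops = filter (\<lambda>i. pending h (as!i)) [0..<length as]"

definition added_resps :: "('p,'o,'r) event list" where
  "added_resps = map (\<lambda>i. Res (ev_proc (h!(as!i))) (Resp (rs!i))) open_ops"

definition completed :: "('p,'o,'r) event list" where
  "completed = kept_events @ added_resps"

text \<open>The linearization point of the k-th entry lies strictly between rank (ns!k) - 1 and
  rank (ns!k); the fractional part orders entries with equal bounds by their log position.\<close>
definition lin_time :: "nat \<Rightarrow> real" where
  "lin_time k = real (rank (ns!k)) - 1 + real (Suc k) / real (Suc (length as))"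

definition lin_order :: "nat list" where
  "lin_order = map (\<lambda>i. rank (as!i)) [0..<length as]"

definition lin_point :: "nat \<Rightarrow> real" where
  "lin_point x = (if x \<in> set lin_order then lin_time (THE i. i < length as \<and> rank (as!i) = x) else 0)"

lemma dropped_pending: "a \<in> dropped \<Longrightarrow> pending h a" by (simp add: dropped_def)

lemma filter_kept_split: "m \<le> n \<Longrightarrow> filter (\<lambda>i. i \<notin> dropped) [0..<n] = filter (\<lambda>i. i \<notin> dropped) [0..<m] @ filter (\<lambda>i. i \<notin> dropped) [m..<n]"
  by (metis filter_append le_Suc_ex upt_add_eq_append zero_le)

lemma rank_mono: "m \<le> n \<Longrightarrow> rank m \<le> rank n"
  unfolding rank_def using filter_kept_split by simp

lemma rank_Suc: "rank (Suc n) = rank n + (if n \<notin> dropped then 1 else 0)"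
  unfolding rank_def by simp

lemma rank_less: "c \<notin> dropped \<Longrightarrow> c < n \<Longrightarrow> rank c < rank n"
  using rank_Suc[of c] rank_mono[of "Suc c" n] by simp

lemma length_kept: "length kept = rank (length h)" by (simp add: kept_def rank_def)

lemma kept_rank:
  assumes "c < length h" "c \<notin> dropped" shows "kept ! rank c = c" "rank c < length kept"
proof -
  have "[0..<length h] = [0..<c] @ [c..<length h]"
    using upt_add_eq_append[of 0 c "length h - c"] assms(1) by simp
  also have "[c..<length h] = c # [Suc c..<length h]" using upt_conv_Cons assms(1) by simp
  finally have "[0..<length h] = [0..<c] @ c # [Suc c..<length h]" .
  hence "kept = filter (\<lambda>i. i \<notin> dropped) [0..<c] @ c # filter (\<lambda>i. i \<notin> dropped) [Suc c..<length h]"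
    using assms(2) by (simp add: kept_def)
  thus "kept ! rank c = c" "rank c < length kept" by (simp_all add: rank_def nth_append)
qed

lemma distinct_kept: "distinct kept" by (simp add: kept_def)

lemma kept_nth: assumes "x < length kept"
  shows "kept!x < length h" "kept!x \<notin> dropped" "rank (kept!x) = x"
proof -
  have "kept!x \<in> set kept" using assms by simp
  thus a: "kept!x < length h" "kept!x \<notin> dropped" by (auto simp: kept_def)
  have "kept ! rank (kept!x) = kept!x" "rank (kept!x) < length kept" using kept_rank a by auto
  thus "rank (kept!x) = x" using distinct_kept assms by (simp add: nth_eq_iff_index_eq)
qed

lemma rank_inj: "a < length h \<Longrightarrow> a \<notin> dropped \<Longrightarrow> b < length h \<Longrightarrow> b \<notin> dropped \<Longrightarrow> rank a = rank b \<Longrightarrow> a = b"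
  by (metis kept_rank(1))

lemma take_rank_kept: "c \<le> length h \<Longrightarrow> take (rank c) kept = filter (\<lambda>i. i \<notin> dropped) [0..<c]"
  unfolding kept_def rank_def using filter_kept_split[of c "length h"] by simp

lemma length_kept_events: "length kept_events = length kept" by (simp add: kept_events_def)

lemma completed_nth_kept: "x < length kept \<Longrightarrow> completed ! x = h ! (kept ! x)"
  by (simp add: completed_def kept_events_def nth_append)

lemma completed_nth_added: "x < length added_resps \<Longrightarrow> completed ! (length kept + x) = added_resps ! x"
  by (simp add: completed_def kept_events_def nth_append)

lemma length_completed: "length completed = length kept + length open_ops" by (simp add: completed_def kept_events_def added_resps_def)

lemma as_less_length: "i < length as \<Longrightarrow> as!i < length h"
  using log_entries by (meson less_le_trans)

lemma as_not_dropped: "i < length as \<Longrightarrow> as!i \<notin> dropped" by (simp add: dropped_def)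

lemma open_ops_nth: "e < length open_ops \<Longrightarrow> open_ops!e < length as \<and> pending h (as!(open_ops!e))"
proof -
  assume "e < length open_ops" hence "open_ops!e \<in> set open_ops" by simp
  thus ?thesis by (simp add: open_ops_def)
qed

lemma distinct_open_ops: "distinct open_ops" by (simp add: open_ops_def)

lemma added_resps_nth: "e < length open_ops \<Longrightarrow> added_resps ! e = Res (ev_proc (h!(as!(open_ops!e)))) (Resp (rs!(open_ops!e)))"
  by (simp add: added_resps_def)

lemma length_added_resps: "length added_resps = length open_ops" by (simp add: added_resps_def)

lemma added_resps_proc_inj: assumes "e < length open_ops" "e' < length open_ops"
  "ev_proc (h!(as!(open_ops!e))) = ev_proc (h!(as!(open_ops!e')))" shows "e = e'"
proof -
  have "as!(open_ops!e) = as!(open_ops!e')" using pending_unique open_ops_nth assms by blast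
  hence "open_ops!e = open_ops!e'" using distinct_as open_ops_nth assms nth_eq_iff_index_eq by blast
  thus ?thesis using distinct_open_ops assms nth_eq_iff_index_eq by blast
qed

lemma matching_completed_kept:
  assumes "matching h a b" shows "matching completed (rank a) (rank b)"
proof -
  have ab: "a < b" "b < length h" "is_inv (h!a)" "\<not> is_inv (h!b)" "ev_proc (h!b) = ev_proc (h!a)"
    and btw: "\<And>k. a < k \<Longrightarrow> k < b \<Longrightarrow> ev_proc (h!k) \<noteq> ev_proc (h!a)"
    using assms unfolding matching_def by auto
  have anp: "\<not> pending h a" using ab unfolding pending_def by auto
  have aD: "a \<notin> dropped" using anp dropped_pending by blast
  have bnp: "\<not> pending h b" using ab unfolding pending_def by auto
  have bD: "b \<notin> dropped" using bnp dropped_pending by blast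
  have al: "a < length h" using ab by simp
  have c1: "rank a < rank b" using rank_less aD ab by simp
  have c2: "rank b < length kept" using kept_rank bD ab by simp
  have e1: "completed ! rank a = h ! a" using completed_nth_kept kept_rank aD al c1 c2 by simp
  have e2: "completed ! rank b = h ! b" using completed_nth_kept kept_rank bD ab c2 by simp
  have "ev_proc (completed ! k) \<noteq> ev_proc (completed ! rank a)" if k: "rank a < k" "k < rank b" for k
  proof -
    have kl: "k < length kept" using k c2 by simp
    let ?c = "kept!k"
    have cc: "rank ?c = k" "?c < length h" "?c \<notin> dropped" using kept_nth kl by auto
    have "a < ?c" using rank_mono[of ?c a] k cc by linarith
    moreover have "?c < b" using rank_mono[of b ?c] k cc by linarith
    ultimately show ?thesis using btw e1 completed_nth_kept kl by simp
  qed
  moreover have "rank b < length completed" using c2 by (simp add: completed_def kept_events_def)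
  ultimately show ?thesis unfolding matching_def using c1 e1 e2 ab by auto
qed

lemma matching_completed_added: assumes e: "e < length open_ops"
  shows "matching completed (rank (as!(open_ops!e))) (length kept + e)"
proof -
  let ?k = "open_ops!e" let ?a = "as!?k"
  have kl: "?k < length as" and pa: "pending h ?a" using open_ops_nth e by auto
  have al: "?a < length h" using as_less_length kl .
  have aD: "?a \<notin> dropped" using as_not_dropped kl .
  have c1: "rank ?a < length kept" and e1: "completed ! rank ?a = h ! ?a"
    using kept_rank aD al completed_nth_kept by auto
  have e2: "completed ! (length kept + e) = Res (ev_proc (h!?a)) (Resp (rs!?k))"
    using completed_nth_added[of e] added_resps_nth[OF e] e length_added_resps by metis
  have "ev_proc (completed ! j) \<noteq> ev_proc (completed ! rank ?a)" if j: "rank ?a < j" "j < length kept + e" for j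
  proof (cases "j < length kept")
    case True
    let ?c = "kept!j"
    have cc: "rank ?c = j" "?c < length h" using kept_nth True by auto
    have "?a < ?c" using rank_mono[of ?c ?a] j cc by linarith
    then show ?thesis using pending_no_later_event[OF pa] cc e1 completed_nth_kept True by simp
  next
    case False
    define e' where "e' = j - length kept"
    have e'l: "e' < e" "j = length kept + e'" using j False by (auto simp: e'_def)
    have e'pl: "e' < length open_ops" using e'l(1) e by linarith
    hence "e' < length added_resps" unfolding length_added_resps .
    hence "completed ! j = added_resps ! e'" using completed_nth_added[of e'] e'l by simp
    hence "ev_proc (completed!j) = ev_proc (h!(as!(open_ops!e')))" using added_resps_nth[OF e'pl] by simp
    moreover have "ev_proc (h!(as!(open_ops!e'))) \<noteq> ev_proc (h!?a)"
      using added_resps_proc_inj[OF e'pl e] e'l(1) by auto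
    ultimately show ?thesis using e1 by simp
  qed
  moreover have "length kept + e < length completed" using length_completed e by simp
  moreover have "is_inv (h!?a)" using pa unfolding pending_def by simp
  ultimately show ?thesis unfolding matching_def using c1 e1 e2 by auto
qed

lemma rank_as: "i < length as \<Longrightarrow> rank (as!i) < length kept \<and> completed ! rank (as!i) = h!(as!i)"
  using kept_rank[OF as_less_length as_not_dropped] completed_nth_kept by metis

lemma completed_nth_response: "matching h a b \<Longrightarrow> completed ! rank b = h ! b"
proof -
  assume "matching h a b"
  hence "\<not> pending h b" "b < length h" unfolding matching_def pending_def by auto
  hence "b \<notin> dropped" "b < length h" using dropped_pending by auto
  thus ?thesis using kept_rank completed_nth_kept by metis
qed

lemma response_in_completed: assumes i: "i < length as"
  shows "\<exists>j0. matching completed (rank (as!i)) j0 \<and> res_val (completed!j0) = Resp (rs!i) \<and> rank (ns!i) \<le> j0"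
proof (cases "pending h (as!i)")
  case True
  hence "i \<in> set open_ops" using i by (simp add: open_ops_def)
  then obtain e where e: "e < length open_ops" "open_ops!e = i" by (metis in_set_conv_nth)
  have "matching completed (rank (as!i)) (length kept + e)" using matching_completed_added[OF e(1)] e(2) by simp
  moreover have "completed ! (length kept + e) = added_resps ! e" using completed_nth_added e(1) length_added_resps by simp
  hence "res_val (completed ! (length kept + e)) = Resp (rs!i)" using added_resps_nth[OF e(1)] e(2) by (simp add: res_val_def)
  moreover have "rank (ns!i) \<le> length kept" using rank_mono[of "ns!i" "length h"] log_entries i length_kept by simp
  ultimately show ?thesis by (intro exI[of _ "length kept + e"]) auto
next
  case False
  have "is_inv (h!(as!i))" "as!i < length h" using log_entries i as_less_length by auto
  then obtain b where b: "matching h (as!i) b" using wf_hist_pending_or_matched[OF wf] False by blast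
  then obtain i' where i': "i' < length as" "as!i' = as!i" "ns!i' \<le> b" "res_val (h!b) = Resp (rs!i')"
    using responses_logged by blast
  have "i' = i" using distinct_as i i' nth_eq_iff_index_eq by blast
  moreover have "matching completed (rank (as!i)) (rank b)" using matching_completed_kept[OF b] .
  moreover have "completed ! rank b = h ! b" using completed_nth_response[OF b] .
  ultimately show ?thesis using i' rank_mono[of "ns!i" b] by (intro exI[of _ "rank b"]) auto
qed

lemma lin_order_nth: "k < length lin_order \<Longrightarrow> lin_order ! k = rank (as!k)" by (simp add: lin_order_def)
lemma length_lin_order: "length lin_order = length as" by (simp add: lin_order_def)

lemma rank_as_inj: "i < length as \<Longrightarrow> j < length as \<Longrightarrow> rank (as!i) = rank (as!j) \<Longrightarrow> i = j"
  using rank_inj as_less_length as_not_dropped distinct_as nth_eq_iff_index_eq by metis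

lemma distinct_lin_order: "distinct lin_order"
  unfolding lin_order_def distinct_map by (auto intro!: inj_onI rank_as_inj)

lemma lin_point_rank: "i < length as \<Longrightarrow> lin_point (rank (as!i)) = lin_time i"
proof -
  assume i: "i < length as"
  have "rank (as!i) \<in> set lin_order" using i by (auto simp: lin_order_def)
  moreover have "(THE j. j < length as \<and> rank (as!j) = rank (as!i)) = i"
    using i rank_as_inj by (intro the_equality) auto
  ultimately show ?thesis by (simp add: lin_point_def)
qed

lemma lin_time_strict_mono: "i < j \<Longrightarrow> j < length as \<Longrightarrow> lin_time i < lin_time j"
proof -
  assume ij: "i < j" "j < length as"
  have "rank (ns!i) \<le> rank (ns!j)" using ns_mono ij rank_mono by simp
  moreover have "real (Suc i) / real (Suc (length as)) < real (Suc j) / real (Suc (length as))"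
    using ij by (simp add: divide_strict_right_mono)
  ultimately show ?thesis unfolding lin_time_def by simp
qed

lemma rank_le_lin_time: "i < length as \<Longrightarrow> real (rank (as!i)) \<le> lin_time i"
proof -
  assume i: "i < length as"
  have "rank (as!i) < rank (ns!i)" using rank_less[OF as_not_dropped[OF i]] log_entries i by simp
  moreover have "0 \<le> real (Suc i) / real (Suc (length as))" by simp
  ultimately show ?thesis unfolding lin_time_def by linarith
qed

lemma lin_time_less_rank: "i < length as \<Longrightarrow> lin_time i < real (rank (ns!i))"
proof -
  assume i: "i < length as"
  have "real (Suc i) / real (Suc (length as)) < 1" using i by simp
  thus ?thesis unfolding lin_time_def by linarith
qed

lemma ops_completed: "ops completed = set lin_order"
proof
  show "ops completed \<subseteq> set lin_order"
  proof
    fix x assume "x \<in> ops completed"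
    hence x: "x < length completed" "is_inv (completed!x)" by (auto simp: ops_def)
    have xl: "x < length kept"
    proof (rule ccontr)
      assume "\<not> x < length kept"
      then obtain e where e: "x = length kept + e" "e < length open_ops" using x length_completed by (metis add_less_cancel_left le_Suc_ex not_less)
      hence "completed!x = added_resps!e" using completed_nth_added length_added_resps by simp
      thus False using x added_resps_nth e by simp
    qed
    let ?c = "kept!x"
    have c: "?c < length h" "?c \<notin> dropped" "rank ?c = x" using kept_nth xl by auto
    have ci: "is_inv (h!?c)" using x completed_nth_kept xl by simp
    have "?c \<in> set as"
    proof (cases "pending h ?c")
      case True thus ?thesis using c by (simp add: dropped_def)
    next
      case False
      then obtain b where "matching h ?c b" using wf_hist_pending_or_matched[OF wf] c ci by blast
      thus ?thesis using responses_logged by (metis nth_mem)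
    qed
    then obtain i where i: "i < length as" "as!i = ?c" by (metis in_set_conv_nth)
    hence "x = lin_order ! i" using c by (simp add: lin_order_def)
    thus "x \<in> set lin_order" using i length_lin_order by simp
  qed
next
  show "set lin_order \<subseteq> ops completed"
  proof
    fix x assume "x \<in> set lin_order"
    then obtain i where i: "i < length as" "x = rank (as!i)" by (auto simp: lin_order_def)
    thus "x \<in> ops completed" using rank_as[OF i(1)] log_entries length_completed by (auto simp: ops_def)
  qed
qed

lemma proj_kept_events: "proj p kept_events = map (nth h) (filter (\<lambda>i. i \<notin> dropped \<and> ev_proc (h!i) = p) [0..<length h])"
  by (simp add: kept_events_def kept_def proj_map_nth filter_filter conj_commute)

lemma proj_kept_events_eq: "(\<forall>d\<in>dropped. ev_proc (h!d) \<noteq> p) \<Longrightarrow> proj p kept_events = proj p h"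
proof -
  assume A: "\<forall>d\<in>dropped. ev_proc (h!d) \<noteq> p"
  have "filter (\<lambda>i. i \<notin> dropped \<and> ev_proc (h!i) = p) [0..<length h] = filter (\<lambda>i. ev_proc (h!i) = p) [0..<length h]"
    using A by (intro filter_cong) auto
  thus ?thesis using proj_kept_events proj_take[of "length h" h p] by simp
qed

lemma proj_added_resps: "proj p added_resps = map (\<lambda>i. Res (ev_proc (h!(as!i))) (Resp (rs!i))) (filter (\<lambda>i. ev_proc (h!(as!i)) = p) open_ops)"
  by (simp add: added_resps_def proj_def filter_map o_def)

lemma dropped_unique: "d \<in> dropped \<Longrightarrow> pending h a \<Longrightarrow> ev_proc (h!d) = ev_proc (h!a) \<Longrightarrow> d = a"
  using dropped_pending pending_unique by blast

lemma proj_take_completed_kept: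
  assumes x: "x < length kept"
  shows "proj (ev_proc (h!(kept!x))) (take x completed) = proj (ev_proc (h!(kept!x))) (take (kept!x) h)"
proof -
  let ?c = "kept!x" let ?p = "ev_proc (h!?c)"
  have c: "?c < length h" "?c \<notin> dropped" "rank ?c = x" using kept_nth x by auto
  have "take x completed = map (nth h) (take x kept)"
    using x length_kept_events by (simp add: completed_def kept_events_def take_map)
  also have "\<dots> = map (nth h) (filter (\<lambda>i. i \<notin> dropped) [0..<?c])" using take_rank_kept[of ?c] c by simp
  finally have "proj ?p (take x completed) =
      map (nth h) (filter (\<lambda>i. ev_proc (h!i) = ?p) (filter (\<lambda>i. i \<notin> dropped) [0..<?c]))"
    by (simp add: proj_map_nth)
  also have "filter (\<lambda>i. ev_proc (h!i) = ?p) (filter (\<lambda>i. i \<notin> dropped) [0..<?c]) =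
      filter (\<lambda>i. ev_proc (h!i) = ?p) [0..<?c]"
    unfolding filter_filter
  proof (intro filter_cong)
    fix i assume "i \<in> set [0..<?c]"
    then show "(i \<notin> dropped \<and> ev_proc (h!i) = ?p) = (ev_proc (h!i) = ?p)"
      using pending_no_later_event dropped_pending c by fastforce
  qed simp
  finally show ?thesis using proj_take[of ?c h] c by simp
qed

lemma proj_take_completed_added:
  assumes e: "e < length open_ops"
  shows "proj (ev_proc (h!(as!(open_ops!e)))) (take (length kept + e) completed)
       = proj (ev_proc (h!(as!(open_ops!e)))) h"
proof -
  let ?a = "as!(open_ops!e)" let ?p = "ev_proc (h!?a)"
  have "proj ?p (take e added_resps) = []"
    unfolding proj_def filter_empty_conv
  proof
    fix y assume "y \<in> set (take e added_resps)"
    then obtain e' where e': "e' < e" "y = added_resps ! e'" using e length_added_resps by (auto simp: in_set_conv_nth)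
    then have "e' < length open_ops" using e by simp
    then show "ev_proc y \<noteq> ?p" using e' added_resps_nth added_resps_proc_inj[OF _ e] by fastforce
  qed
  moreover have "proj ?p kept_events = proj ?p h"
    using proj_kept_events_eq dropped_unique open_ops_nth[OF e] as_not_dropped by metis
  ultimately show ?thesis using length_kept_events by (simp add: completed_def)
qed

lemma wf_hist_completed: "wf_hist completed"
  unfolding wf_hist_iff
proof (intro allI impI)
  fix x assume x: "x < length completed"
  show "is_inv (completed!x) \<longleftrightarrow> even (length (proj (ev_proc (completed!x)) (take x completed)))"
  proof (cases "x < length kept")
    case True
    have "kept!x < length h" using kept_nth True by auto
    then show ?thesis
      using wf proj_take_completed_kept[OF True] completed_nth_kept[OF True] unfolding wf_hist_iff by simp
  next
    case False
    then obtain e where e: "x = length kept + e" "e < length open_ops"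
      using x length_completed by (metis add_less_cancel_left le_Suc_ex not_less)
    have "pending h (as!(open_ops!e))" using open_ops_nth e by auto
    then show ?thesis
      using e proj_take_completed_added[OF e(2)] completed_nth_added added_resps_nth length_added_resps
        pending_odd_proj[OF wf] by simp
  qed
qed

lemma proj_added_resps_Nil:
  "(\<And>a. pending h a \<Longrightarrow> a \<in> set as \<Longrightarrow> ev_proc (h!a) \<noteq> p) \<Longrightarrow> proj p added_resps = []"
  unfolding proj_added_resps map_is_Nil_conv filter_empty_conv by (auto simp: open_ops_def)

lemma proj_completed_dropped:
  assumes a: "pending h a" "a \<in> dropped"
  shows "proj (ev_proc (h!a)) completed = proj (ev_proc (h!a)) (take a h)"
proof -
  let ?p = "ev_proc (h!a)"
  have al: "a < length h" using a unfolding pending_def by simp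
  have "[0..<length h] = [0..<a] @ [a..<length h]"
    using upt_add_eq_append[of 0 a "length h - a"] al by simp
  moreover have "filter (\<lambda>i. i \<notin> dropped \<and> ev_proc (h!i) = ?p) [0..<a] = filter (\<lambda>i. ev_proc (h!i) = ?p) [0..<a]"
    using dropped_unique a(1) by (intro filter_cong) auto
  moreover have "filter (\<lambda>i. i \<notin> dropped \<and> ev_proc (h!i) = ?p) [a..<length h] = []"
  proof -
    have "\<not> (i \<notin> dropped \<and> ev_proc (h!i) = ?p)" if "a \<le> i" "i < length h" for i
      using that a pending_no_later_event[OF a(1), of i] by (cases "i = a") auto
    then show ?thesis by (auto simp: filter_empty_conv)
  qed
  ultimately have "proj ?p kept_events = proj ?p (take a h)"
    using proj_kept_events proj_take[of a h ?p] al by simp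
  moreover have "ev_proc (h!a') \<noteq> ?p" if "pending h a'" "a' \<in> set as" for a'
    using that a pending_unique[of h a' a] by (auto simp: dropped_def)
  then have "proj ?p added_resps = []" by (rule proj_added_resps_Nil)
  ultimately show ?thesis by (simp add: completed_def)
qed

lemma length_proj_completed_open:
  assumes a: "pending h a" "a \<notin> dropped"
  shows "length (proj (ev_proc (h!a)) completed) = Suc (length (proj (ev_proc (h!a)) h))"
proof -
  let ?p = "ev_proc (h!a)"
  have "a \<in> set as" using a by (simp add: dropped_def)
  then obtain k where k: "k < length as" "as!k = a" by (metis in_set_conv_nth)
  have k_unique: "i = k" if "i < length as" "pending h (as!i)" "ev_proc (h!(as!i)) = ?p" for i
  proof -
    have "as!i = a" using pending_unique[OF that(2) a(1)] that(3) by simp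
    then show ?thesis using nth_eq_iff_index_eq[OF distinct_as that(1) k(1)] k(2) by simp
  qed
  let ?xs = "filter (\<lambda>i. ev_proc (h!(as!i)) = ?p) open_ops"
  have "set ?xs = {k}"
  proof
    show "set ?xs \<subseteq> {k}" using k_unique by (auto simp: open_ops_def)
    show "{k} \<subseteq> set ?xs" using k a(1) by (simp add: open_ops_def)
  qed
  moreover have "distinct ?xs" using distinct_open_ops by simp
  ultimately have "length ?xs = 1" by (simp add: distinct_card[symmetric])
  then have "length (proj ?p added_resps) = 1" by (simp add: proj_added_resps)
  moreover have "proj ?p kept_events = proj ?p h" using proj_kept_events_eq dropped_unique a by metis
  ultimately show ?thesis by (simp add: completed_def)
qed

lemma even_proj_completed: "even (length (proj p completed))"
proof (cases "\<exists>a. pending h a \<and> ev_proc (h!a) = p")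
  case True
  then obtain a where a: "pending h a" "ev_proc (h!a) = p" by blast
  show ?thesis
  proof (cases "a \<in> dropped")
    case True
    have "even (length (proj p (take a h)))" using wf a unfolding wf_hist_iff pending_def by blast
    then show ?thesis using proj_completed_dropped[OF a(1) True] a(2) by simp
  next
    case False
    then show ?thesis using length_proj_completed_open[OF a(1)] pending_odd_proj[OF wf a(1)] a(2) by simp
  qed
next
  case False
  then have "proj p kept_events = proj p h" "proj p added_resps = []"
    using proj_kept_events_eq[of p] dropped_pending proj_added_resps_Nil[of p] by auto
  moreover have "even (length (proj p h))" using wf_hist_pending_or_even[OF wf, of p] False by blast
  ultimately show ?thesis by (simp add: completed_def)
qed

lemma is_completion_completed: "is_completion h completed"
  unfolding is_completion_def
proof (intro exI conjI)
  show "\<forall>i\<in>dropped. pending h i" using dropped_pending by blast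
  show "\<forall>e\<in>set added_resps. \<not> is_inv e" by (auto simp: added_resps_def)
  show "completed = map (\<lambda>i. h ! i) (filter (\<lambda>i. i \<notin> dropped) [0..<length h]) @ added_resps"
    by (simp add: completed_def kept_events_def kept_def)
  show "complete_hist completed" using wf_hist_completed even_proj_completed by (simp add: complete_hist_def)
qed

lemma linearization_completed: "linearization completed lin_point"
  unfolding linearization_def
proof (intro conjI ballI allI impI)
  show "inj_on lin_point (ops completed)"
    unfolding ops_completed
  proof (rule inj_onI)
    fix x y assume "x \<in> set lin_order" "y \<in> set lin_order" "lin_point x = lin_point y"
    then obtain i j where ij: "i < length as" "x = rank (as!i)" "j < length as" "y = rank (as!j)"
      "lin_time i = lin_time j"
      by (auto simp: lin_order_def lin_point_rank)
    then have "i = j" using lin_time_strict_mono by (metis less_irrefl nat_neq_iff)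
    then show "x = y" using ij by simp
  qed
next
  fix x j assume x: "x \<in> ops completed" and m: "matching completed x j"
  then obtain i where i: "i < length as" "x = rank (as!i)" unfolding ops_completed by (auto simp: lin_order_def)
  obtain j0 where j0: "matching completed (rank (as!i)) j0" "rank (ns!i) \<le> j0"
    using response_in_completed[OF i(1)] by blast
  have "j = j0" using matching_unique m j0 i by simp
  then show "real x \<le> lin_point x" "lin_point x \<le> real j"
    using lin_point_rank rank_le_lin_time lin_time_less_rank i j0 by fastforce+
qed

lemma conforms_completed: "conforms \<delta> s0 completed lin_point"
  unfolding conforms_def
proof (intro exI[of _ lin_order] exI[of _ sts] conjI allI impI)
  show "distinct lin_order" by (rule distinct_lin_order)
  show "set lin_order = ops completed" using ops_completed by simp
  show "sorted_wrt (\<lambda>a b. lin_point a < lin_point b) lin_order"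
    unfolding sorted_wrt_iff_nth_less length_lin_order
    using lin_order_nth length_lin_order lin_point_rank lin_time_strict_mono by auto
  show "length sts = Suc (length lin_order)" using length_sts length_lin_order by simp
  show "sts ! 0 = s0" by (rule sts_0)
  fix k assume k: "k < length lin_order"
  then have kl: "k < length as" using length_lin_order by simp
  obtain j0 where j0: "matching completed (rank (as!k)) j0" "res_val (completed!j0) = Resp (rs!k)"
    using response_in_completed[OF kl] by blast
  show "\<exists>j r. matching completed (lin_order ! k) j \<and> res_val (completed ! j) = Resp r \<and>
      (sts ! k, inv_op (completed ! (lin_order ! k)), sts ! Suc k, r) \<in> \<delta>"
    using j0 log_steps kl rank_as[OF kl] lin_order_nth[OF k] by auto
qed

theorem completion_linearizable:
  "\<exists>h' pt. is_completion h h' \<and> linearization h' pt \<and> conforms \<delta> s0 h' pt"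
  using is_completion_completed linearization_completed conforms_completed by blast

end

abbreviation pc_of :: "('p,'o,'r,'s) conf \<Rightarrow> 'p \<Rightarrow> nat" where "pc_of c q \<equiv> l_pc (cL c q)"
abbreviation ticket_of :: "('p,'o,'r,'s) conf \<Rightarrow> 'p \<Rightarrow> nat" where "ticket_of c q \<equiv> l_t (cL c q)"

definition issued :: "('p,'o,'r,'s) conf \<Rightarrow> nat \<Rightarrow> bool" where
  "issued c t \<longleftrightarrow> 1 \<le> t \<and> t < cC c"

definition ticket_proc :: "('p,'o,'r) event list \<Rightarrow> (nat \<Rightarrow> nat) \<Rightarrow> nat \<Rightarrow> 'p" where
  "ticket_proc h tm t = ev_proc (h ! tm t)"

definition ticket_op :: "('p,'o,'r) event list \<Rightarrow> (nat \<Rightarrow> nat) \<Rightarrow> nat \<Rightarrow> 'o" where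
  "ticket_op h tm t = inv_op (h ! tm t)"

text \<open>Between lines 2 and 3, H of q may still hold a stale value for its new ticket t.\<close>
definition unannounced :: "('p,'o,'r,'s) conf \<Rightarrow> 'p \<Rightarrow> nat \<Rightarrow> bool" where
  "unannounced c q t \<longleftrightarrow> pc_of c q = 3 \<and> ticket_of c q = t"

definition A_inv :: "('p,'o,'r) event list \<Rightarrow> ('p,'o,'r,'s) conf \<Rightarrow> (nat \<Rightarrow> nat)
    \<Rightarrow> nat \<times> 'o aop \<times> 'p ptr \<Rightarrow> bool" where
  "A_inv h c tm a \<longleftrightarrow> a = (0, NOOP, HNoop) \<or>
     (issued c (fst a) \<and> fst (snd a) = Op (ticket_op h tm (fst a))
      \<and> snd (snd a) = HP (ticket_proc h tm (fst a)) \<and> \<not> unannounced c (ticket_proc h tm (fst a)) (fst a))"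

record ('p,'r,'s) entry =
  e_time :: nat
  e_proc :: 'p
  e_bound :: nat
  e_resp :: 'r
  e_state :: 's

definition S_of_log :: "'s \<Rightarrow> ('p,'r,'s) entry list \<Rightarrow> nat \<Rightarrow> nat \<times> 's \<times> 'r rval \<times> 'p ptr" where
  "S_of_log s0 lg k = (if k = 0 then (0, s0, Bot, HNoop)
     else (e_time (lg!(k-1)), e_state (lg!(k-1)), Resp (e_resp (lg!(k-1))), HP (e_proc (lg!(k-1)))))"

definition log_state :: "'s \<Rightarrow> ('p,'r,'s) entry list \<Rightarrow> nat \<Rightarrow> 's" where
  "log_state s0 lg k = (if k = 0 then s0 else e_state (lg!(k-1)))"

definition S_read :: "('p,'o,'r,'s) loc \<Rightarrow> nat \<times> 's \<times> 'r rval \<times> 'p ptr" where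
  "S_read l = (l_ts l, l_ss l, l_rs l, l_ps l)"

definition A_read :: "('p,'o,'r,'s) loc \<Rightarrow> nat \<times> 'o aop \<times> 'p ptr" where
  "A_read l = (l_t1 l, l_o1 l, l_p1 l)"

definition ticket_inv :: "('p,'o,'r) event list \<Rightarrow> ('p,'o,'r,'s) conf \<Rightarrow> (nat \<Rightarrow> nat) \<Rightarrow> bool" where
  "ticket_inv h c tm \<longleftrightarrow> 1 \<le> cC c \<and> (\<forall>t. issued c t \<longrightarrow> tm t < length h \<and> is_inv (h ! tm t))
     \<and> inj_on tm {t. issued c t}"

definition pc_inv :: "('p,'o,'r) event list \<Rightarrow> ('p,'o,'r,'s) conf \<Rightarrow> (nat \<Rightarrow> nat) \<Rightarrow> 'p
    \<Rightarrow> ('p,'o,'r,'s) loc \<Rightarrow> bool" where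
  "pc_inv h c tm q l \<longleftrightarrow> l_pc l \<in> {0,2,3,4,5,6,7,8,9,11,12,13,14}
     \<and> (l_pc l = 0 \<longleftrightarrow> even (length (proj q h)))
     \<and> (\<forall>a. l_pc l = 0 \<longrightarrow> pending h a \<longrightarrow> ev_proc (h!a) \<noteq> q)
     \<and> (l_pc l \<noteq> 0 \<longrightarrow> (\<exists>a. pending h a \<and> h!a = Inv q (l_op l)
          \<and> (l_pc l = 2 \<longrightarrow> (\<forall>t. issued c t \<longrightarrow> tm t \<noteq> a))
          \<and> (3 \<le> l_pc l \<longrightarrow> issued c (l_t l) \<and> tm (l_t l) = a)))"

definition hist_inv :: "('p,'o,'r) event list \<Rightarrow> (nat \<Rightarrow> nat) \<Rightarrow> ('p,'r,'s) entry list \<Rightarrow> bool" where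
  "hist_inv h tm lg \<longleftrightarrow> wf_hist h
     \<and> (\<forall>a b. matching h a b \<longrightarrow>
          (\<exists>e\<in>set lg. tm (e_time e) = a \<and> e_bound e \<le> b \<and> res_val (h!b) = Resp (e_resp e)))"

definition log_inv :: "('s \<times> 'o \<times> 's \<times> 'r) set \<Rightarrow> 's \<Rightarrow> ('p,'o,'r) event list \<Rightarrow> ('p,'o,'r,'s) conf
    \<Rightarrow> (nat \<Rightarrow> nat) \<Rightarrow> ('p,'r,'s) entry list \<Rightarrow> bool" where
  "log_inv \<delta> s0 h c tm lg \<longleftrightarrow>
     (\<forall>e\<in>set lg. issued c (e_time e) \<and> e_proc e = ticket_proc h tm (e_time e)
        \<and> \<not> unannounced c (e_proc e) (e_time e) \<and> tm (e_time e) < e_bound e \<and> e_bound e \<le> length h)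
     \<and> distinct (map e_time lg)
     \<and> (\<forall>i j. i \<le> j \<longrightarrow> j < length lg \<longrightarrow> e_bound (lg!i) \<le> e_bound (lg!j))
     \<and> (\<forall>i<length lg. (log_state s0 lg i, ticket_op h tm (e_time (lg!i)), e_state (lg!i), e_resp (lg!i)) \<in> \<delta>)
     \<and> cS c = S_of_log s0 lg (length lg)"

definition H_inv :: "('p,'o,'r) event list \<Rightarrow> ('p,'o,'r,'s) conf \<Rightarrow> (nat \<Rightarrow> nat) \<Rightarrow> ('p,'r,'s) entry list
    \<Rightarrow> 'p \<Rightarrow> nat \<times> 'r rval \<Rightarrow> ('p,'o,'r,'s) loc \<Rightarrow> bool" where
  "H_inv h c tm lg q hq l \<longleftrightarrow>
     (\<forall>t. hq = (t, Null) \<longrightarrow> issued c t \<longrightarrow> ticket_proc h tm t = q \<longrightarrow> 3 \<le> l_pc l \<and> l_pc l \<le> 13 \<and> l_t l = t)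
   \<and> (4 \<le> l_pc l \<longrightarrow> hq = (l_t l, Null) \<or> (\<exists>e\<in>set lg. e_time e = l_t l \<and> hq = (l_t l, Resp (e_resp e))))
   \<and> (l_pc l = 14 \<longrightarrow> hq \<noteq> (l_t l, Null))"

text \<open>Helping: the response of every log entry but the last has been written back to H of
  its owner (line 6 precedes any new GCAS on S).\<close>
definition log_H_written :: "('p,'o,'r,'s) conf \<Rightarrow> ('p,'r,'s) entry list \<Rightarrow> bool" where
  "log_H_written c lg \<longleftrightarrow> (\<forall>j. Suc j < length lg \<longrightarrow> cH c (e_proc (lg!j)) \<noteq> (e_time (lg!j), Null))"

text \<open>About the values a process has read: its copy of S is a past value of S, and at lines 11
  and 12 the announcement it read from A is not yet logged unless S has changed since line 5
  (so that the GCAS at line 12 fails).\<close>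
definition local_inv :: "('s \<times> 'o \<times> 's \<times> 'r) set \<Rightarrow> 's \<Rightarrow> ('p,'o,'r) event list \<Rightarrow> ('p,'o,'r,'s) conf
    \<Rightarrow> (nat \<Rightarrow> nat) \<Rightarrow> ('p,'r,'s) entry list \<Rightarrow> ('p,'o,'r,'s) loc \<Rightarrow> bool" where
  "local_inv \<delta> s0 h c tm lg l \<longleftrightarrow>
     (6 \<le> l_pc l \<longrightarrow> l_pc l \<le> 13 \<longrightarrow> (\<exists>k\<le>length lg. S_read l = S_of_log s0 lg k))
   \<and> (7 \<le> l_pc l \<longrightarrow> l_pc l \<le> 13 \<longrightarrow> S_read l = cS c \<longrightarrow> lg \<noteq> [] \<longrightarrow>
        cH c (e_proc (last lg)) \<noteq> (e_time (last lg), Null))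
   \<and> (l_pc l \<in> {9,11,12,13} \<longrightarrow> A_inv h c tm (A_read l))
   \<and> (l_pc l \<in> {11,12} \<longrightarrow> 1 \<le> l_t1 l \<and> (l_t1 l \<notin> e_time ` set lg \<or> S_read l \<noteq> cS c))
   \<and> (l_pc l = 12 \<longrightarrow> (\<exists>r. l_r1 l = Resp r \<and> (l_ss l, ticket_op h tm (l_t1 l), l_s1 l, r) \<in> \<delta>))"

definition U_inv :: "('s \<times> 'o \<times> 's \<times> 'r) set \<Rightarrow> 's \<Rightarrow> ('p,'o,'r) event list \<Rightarrow> ('p,'o,'r,'s) conf
    \<Rightarrow> (nat \<Rightarrow> nat) \<Rightarrow> ('p,'r,'s) entry list \<Rightarrow> bool" where
  "U_inv \<delta> s0 h c tm lg \<longleftrightarrow> ticket_inv h c tm \<and> (\<forall>q. pc_inv h c tm q (cL c q)) \<and> hist_inv h tm lg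
     \<and> log_inv \<delta> s0 h c tm lg \<and> (\<forall>q. H_inv h c tm lg q (cH c q) (cL c q)) \<and> log_H_written c lg
     \<and> A_inv h c tm (cA c) \<and> (\<forall>q. local_inv \<delta> s0 h c tm lg (cL c q))"

lemma updL_simps[simp]: "cC (updL c p f) = cC c" "cA (updL c p f) = cA c" "cS (updL c p f) = cS c"
  "cH (updL c p f) = cH c" "cL (updL c p f) = (cL c)(p := f (cL c p))"
  by (simp_all add: updL_def)

lemma deref_HP: "deref c (HP q) = cH c q" by (simp add: deref_def)

lemma deref_HNoop: "deref c HNoop = (0, Bot)" by (simp add: deref_def)

lemma state_S_of_log: "k \<le> length lg \<Longrightarrow> fst (snd (S_of_log s0 lg k)) = log_state s0 lg k"
  by (simp add: S_of_log_def log_state_def)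

lemma S_of_log_append: "k \<le> length lg \<Longrightarrow> S_of_log s0 (lg @ [E]) k = S_of_log s0 lg k"
  by (auto simp: S_of_log_def nth_append)

lemma log_state_append: "k \<le> length lg \<Longrightarrow> log_state s0 (lg @ [E]) k = log_state s0 lg k"
  by (auto simp: log_state_def nth_append)

lemma time_S_of_log: "k \<le> length lg \<Longrightarrow> fst (S_of_log s0 lg k) = 0 \<or> fst (S_of_log s0 lg k) \<in> e_time ` set lg"
  by (auto simp: S_of_log_def)

lemma issued_cong: "cC c' = cC c \<Longrightarrow> issued c' = issued c"
  by (simp add: issued_def fun_eq_iff)

lemma A_inv_cong:
  assumes "cC c' = cC c" "unannounced c' = unannounced c" shows "A_inv h c' tm = A_inv h c tm"
  unfolding A_inv_def issued_cong[OF assms(1)] assms(2) ..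

lemma local_inv_cong:
  assumes "cC c' = cC c" "unannounced c' = unannounced c" "cS c' = cS c" "cH c' = cH c"
  shows "local_inv \<delta> s0 h c' tm lg = local_inv \<delta> s0 h c tm lg"
  unfolding local_inv_def[abs_def] A_inv_cong[OF assms(1,2)] assms(3,4) ..

lemma pc_inv_cong: assumes "cC c' = cC c" shows "pc_inv h c' tm = pc_inv h c tm"
  unfolding pc_inv_def[abs_def] issued_cong[OF assms] ..

lemma H_inv_cong: assumes "cC c' = cC c" shows "H_inv h c' tm lg = H_inv h c tm lg"
  unfolding H_inv_def[abs_def] issued_cong[OF assms] ..

lemma ticket_inv_cong: assumes "cC c' = cC c" shows "ticket_inv h c' tm = ticket_inv h c tm"
  unfolding ticket_inv_def issued_cong[OF assms] assms ..

lemma log_inv_cong: assumes "cC c' = cC c" "unannounced c' = unannounced c" "cS c' = cS c"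
  shows "log_inv \<delta> s0 h c' tm lg = log_inv \<delta> s0 h c tm lg"
  unfolding log_inv_def issued_cong[OF assms(1)] assms(2,3) ..

lemma log_H_written_cong: "cH c' = cH c \<Longrightarrow> log_H_written c' lg = log_H_written c lg" by (simp add: log_H_written_def)

lemma unannounced_upd:
  assumes "cL c' = (cL c)(p := l')" "l_pc l' = 3 \<longleftrightarrow> pc_of c p = 3"
  "l_pc l' = 3 \<Longrightarrow> l_t l' = ticket_of c p" shows "unannounced c' = unannounced c"
  using assms by (auto simp: unannounced_def fun_eq_iff)

definition no_new_null :: "('p,'o,'r,'s) conf \<Rightarrow> ('p,'o,'r,'s) conf \<Rightarrow> ('p,'r,'s) entry list \<Rightarrow> bool" where
  "no_new_null c c' lg \<longleftrightarrow> (\<forall>E\<in>set lg. cH c' (e_proc E) = (e_time E, Null) \<longrightarrow> cH c (e_proc E) = (e_time E, Null))"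

lemma log_H_written_weaken: "log_H_written c lg \<Longrightarrow> no_new_null c c' lg \<Longrightarrow> log_H_written c' lg"
  unfolding log_H_written_def no_new_null_def by (meson nth_mem Suc_lessD)

lemma A_inv_weaken: "A_inv h c tm tr \<Longrightarrow> cC c' = cC c \<Longrightarrow> (\<forall>q t. unannounced c' q t \<longrightarrow> unannounced c q t) \<Longrightarrow> A_inv h c' tm tr"
  unfolding A_inv_def using issued_cong[of c' c] by auto

lemma log_inv_weaken: "log_inv \<delta> s0 h c tm lg \<Longrightarrow> cC c' = cC c \<Longrightarrow> cS c' = cS c \<Longrightarrow>
   (\<forall>q t. unannounced c' q t \<longrightarrow> unannounced c q t) \<Longrightarrow> log_inv \<delta> s0 h c' tm lg"
  unfolding log_inv_def using issued_cong[of c' c] by auto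

lemma local_inv_weaken:
  assumes P: "local_inv \<delta> s0 h c tm lg l" and g: "cC c' = cC c" "cS c' = cS c"
  and f: "\<forall>q t. unannounced c' q t \<longrightarrow> unannounced c q t" and N: "no_new_null c c' lg"
  shows "local_inv \<delta> s0 h c' tm lg l"
proof -
  have "lg \<noteq> [] \<Longrightarrow> cH c (e_proc (last lg)) \<noteq> (e_time (last lg), Null) \<Longrightarrow> cH c' (e_proc (last lg)) \<noteq> (e_time (last lg), Null)"
    using N unfolding no_new_null_def by auto
  moreover have "A_inv h c tm (A_read l) \<Longrightarrow> A_inv h c' tm (A_read l)" using A_inv_weaken g f by blast
  ultimately show ?thesis using P g unfolding local_inv_def by auto
qed

lemma H_inv_mono_log: "H_inv h c tm lg q hq l \<Longrightarrow> set lg \<subseteq> set lg' \<Longrightarrow> H_inv h c tm lg' q hq l"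
  unfolding H_inv_def by blast

lemma gcas_ptr_cases: assumes "S_read l = S_of_log s0 lg k" "k \<le> length lg"
  shows "gcas_ptr c (l_ps l) (l_ts l, Null) (l_ts l, l_rs l) q = cH c q \<or>
    (\<exists>E\<in>set lg. cH c q = (e_time E, Null) \<and> gcas_ptr c (l_ps l) (l_ts l, Null) (l_ts l, l_rs l) q = (e_time E, Resp (e_resp E)))"
proof (cases "k = 0")
  case True
  then have "l_ps l = HNoop" using assms by (simp add: S_read_def S_of_log_def)
  then show ?thesis by (simp add: gcas_ptr_def)
next
  case False
  let ?E = "lg!(k-1)"
  have E: "?E \<in> set lg" using False assms(2) by simp
  have l: "l_ps l = HP (e_proc ?E)" "l_ts l = e_time ?E" "l_rs l = Resp (e_resp ?E)" using assms(1) False by (simp_all add: S_read_def S_of_log_def)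
  show ?thesis using E by (auto simp: gcas_ptr_def l)
qed

lemma H_inv_gcas: assumes "H_inv h c tm lg q hq l"
  and "hq' = hq \<or> (\<exists>E\<in>set lg. hq = (e_time E, Null) \<and> hq' = (e_time E, Resp (e_resp E)))"
  shows "H_inv h c tm lg q hq' l"
  using assms unfolding H_inv_def by auto

lemma ticket_proc_snoc: "tm t < length h \<Longrightarrow> ticket_proc (h@[e]) tm t = ticket_proc h tm t"
  by (simp add: ticket_proc_def nth_append)

lemma ticket_op_snoc: "tm t < length h \<Longrightarrow> ticket_op (h@[e]) tm t = ticket_op h tm t"
  by (simp add: ticket_op_def nth_append)

lemma A_inv_snoc:
  assumes T: "ticket_inv h c tm" and A: "A_inv h c tm tr" shows "A_inv (h@[e]) c tm tr"
proof (cases "tr = (0, NOOP, HNoop)")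
  case False
  hence v: "issued c (fst tr)" using A by (auto simp: A_inv_def)
  hence "tm (fst tr) < length h" using T by (simp add: ticket_inv_def)
  thus ?thesis using A by (simp add: A_inv_def ticket_proc_snoc ticket_op_snoc)
qed (simp add: A_inv_def)

lemma ticket_inv_snoc: "ticket_inv h c tm \<Longrightarrow> ticket_inv (h@[e]) c tm"
  unfolding ticket_inv_def by (auto simp: nth_append)

lemma log_inv_snoc:
  assumes T: "ticket_inv h c tm" and L: "log_inv \<delta> s0 h c tm lg" shows "log_inv \<delta> s0 (h@[e]) c tm lg"
proof -
  have v: "\<And>E. E \<in> set lg \<Longrightarrow> tm (e_time E) < length h" using T L by (auto simp: ticket_inv_def log_inv_def)
  show ?thesis using L unfolding log_inv_def
    using v ticket_proc_snoc ticket_op_snoc nth_mem by (smt (verit, ccfv_threshold) le_SucI length_append_singleton)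
qed

lemma H_inv_snoc:
  assumes T: "ticket_inv h c tm" and P: "H_inv h c tm lg q hq l" shows "H_inv (h@[e]) c tm lg q hq l"
  using P T unfolding H_inv_def ticket_inv_def by (auto simp: ticket_proc_snoc)

lemma local_inv_snoc:
  assumes T: "ticket_inv h c tm" and P: "local_inv \<delta> s0 h c tm lg l" shows "local_inv \<delta> s0 (h@[e]) c tm lg l"
proof -
  have "l_pc l = 12 \<Longrightarrow> ticket_op (h@[e]) tm (l_t1 l) = ticket_op h tm (l_t1 l)"
  proof -
    assume "l_pc l = 12"
    hence "A_inv h c tm (A_read l)" "1 \<le> l_t1 l" using P by (auto simp: local_inv_def)
    hence "issued c (l_t1 l)" by (auto simp: A_inv_def A_read_def)
    hence "tm (l_t1 l) < length h" using T by (simp add: ticket_inv_def)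
    thus ?thesis by (rule ticket_op_snoc)
  qed
  moreover have "A_inv h c tm (A_read l) \<Longrightarrow> A_inv (h@[e]) c tm (A_read l)" using A_inv_snoc[OF T] .
  ultimately show ?thesis using P unfolding local_inv_def by auto
qed

lemma pc_inv_snoc_other: assumes P: "pc_inv h c tm q l" and e: "ev_proc e \<noteq> q"
  shows "pc_inv (h@[e]) c tm q l"
proof -
  have pr: "proj q (h@[e]) = proj q h" using e by (simp add: proj_single)
  have c3: "\<forall>a. l_pc l = 0 \<longrightarrow> pending (h@[e]) a \<longrightarrow> ev_proc ((h@[e])!a) \<noteq> q"
  proof (intro allI impI)
    fix a assume z: "l_pc l = 0" and pa: "pending (h@[e]) a"
    show "ev_proc ((h@[e])!a) \<noteq> q"
    proof (cases "a = length h")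
      case True thus ?thesis using e by simp
    next
      case False
      hence "pending h a" "a < length h" using pa unfolding pending_snoc by (auto simp: pending_def)
      thus ?thesis using P z by (auto simp: pc_inv_def nth_append)
    qed
  qed
  have c4: "l_pc l \<noteq> 0 \<longrightarrow> (\<exists>a. pending (h@[e]) a \<and> (h@[e])!a = Inv q (l_op l)
          \<and> (l_pc l = 2 \<longrightarrow> (\<forall>t. issued c t \<longrightarrow> tm t \<noteq> a))
          \<and> (3 \<le> l_pc l \<longrightarrow> issued c (l_t l) \<and> tm (l_t l) = a))"
  proof
    assume "l_pc l \<noteq> 0"
    then obtain a where a: "pending h a" "h!a = Inv q (l_op l)"
          "l_pc l = 2 \<longrightarrow> (\<forall>t. issued c t \<longrightarrow> tm t \<noteq> a)"
          "3 \<le> l_pc l \<longrightarrow> issued c (l_t l) \<and> tm (l_t l) = a" using P unfolding pc_inv_def by blast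
    have al: "a < length h" using a(1) by (simp add: pending_def)
    have "pending (h@[e]) a" using a e unfolding pending_snoc by simp
    thus "\<exists>a. pending (h@[e]) a \<and> (h@[e])!a = Inv q (l_op l)
          \<and> (l_pc l = 2 \<longrightarrow> (\<forall>t. issued c t \<longrightarrow> tm t \<noteq> a))
          \<and> (3 \<le> l_pc l \<longrightarrow> issued c (l_t l) \<and> tm (l_t l) = a)" using a al by (auto simp: nth_append)
  qed
  show ?thesis using P c3 c4 unfolding pc_inv_def pr by blast
qed

lemma hist_inv_snoc_Inv:
  assumes "hist_inv h tm lg" "even (length (proj p h))"
  shows "hist_inv (h @ [Inv p oo]) tm lg"
  using assms by (auto simp: hist_inv_def wf_hist_snoc matching_snoc nth_append dest: matching_def[THEN iffD1])

lemma hist_inv_snoc_Res: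
  assumes H: "hist_inv h tm lg" and odd: "odd (length (proj p h))"
    and a: "pending h a" "ev_proc (h!a) = p"
    and E: "E \<in> set lg" "tm (e_time E) = a" "e_bound E \<le> length h"
  shows "hist_inv (h @ [Res p (Resp (e_resp E))]) tm lg"
  unfolding hist_inv_def
proof (intro conjI allI impI)
  show "wf_hist (h @ [Res p (Resp (e_resp E))])" using H odd by (simp add: hist_inv_def wf_hist_snoc)
  fix a' b assume m: "matching (h @ [Res p (Resp (e_resp E))]) a' b"
  show "\<exists>e\<in>set lg. tm (e_time e) = a' \<and> e_bound e \<le> b \<and> res_val ((h @ [Res p (Resp (e_resp E))])!b) = Resp (e_resp e)"
  proof (cases "matching h a' b")
    case True
    then show ?thesis using H by (auto simp: hist_inv_def nth_append matching_def)
  next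
    case False
    then have "b = length h" "a' = a" using m a pending_unique by (auto simp: matching_snoc)
    then show ?thesis using E by (intro bexI[OF _ E(1)]) (simp add: res_val_def)
  qed
qed

lemma U_invD: assumes "U_inv \<delta> s0 h c tm lg"
  shows "ticket_inv h c tm" "\<And>q. pc_inv h c tm q (cL c q)" "hist_inv h tm lg" "log_inv \<delta> s0 h c tm lg"
    "\<And>q. H_inv h c tm lg q (cH c q) (cL c q)" "log_H_written c lg" "A_inv h c tm (cA c)" "\<And>x. local_inv \<delta> s0 h c tm lg (cL c x)"
  using assms by (simp_all add: U_inv_def)

lemma U_inv_init: "init_conf s0 c0 \<Longrightarrow> U_inv \<delta> s0 [] c0 (\<lambda>_. 0) []"
  unfolding U_inv_def init_conf_def ticket_inv_def pc_inv_def hist_inv_def log_inv_def H_inv_def log_H_written_def local_inv_def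
  by (auto simp: issued_def pending_def matching_def wf_hist_def S_of_log_def A_inv_def inj_on_def)

lemma U_inv_local_step:
  assumes I: "U_inv \<delta> s0 h c tm lg"
    and g: "cC c' = cC c" "cS c' = cS c" "cH c' = cH c" "cL c' = (cL c)(p := l')"
    and f: "unannounced c' = unannounced c"
    and A: "A_inv h c tm (cA c')"
    and P1: "pc_inv h c tm p l'" and P2: "H_inv h c tm lg p (cH c p) l'" and P3: "local_inv \<delta> s0 h c tm lg l'"
  shows "U_inv \<delta> s0 h c' tm lg"
  unfolding U_inv_def
proof (intro conjI allI)
  show "ticket_inv h c' tm" using I ticket_inv_cong[OF g(1)] by (simp add: U_inv_def)
  show "hist_inv h tm lg" using I by (simp add: U_inv_def)
  show "log_inv \<delta> s0 h c' tm lg" using I log_inv_cong[OF g(1) f g(2)] by (simp add: U_inv_def)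
  show "log_H_written c' lg" using I log_H_written_cong[OF g(3)] by (simp add: U_inv_def)
  show "A_inv h c' tm (cA c')" using A A_inv_cong[OF g(1) f] by simp
  fix q
  show "pc_inv h c' tm q (cL c' q)" using I P1 pc_inv_cong[OF g(1)] g(4) by (cases "q = p") (simp_all add: U_inv_def)
  show "H_inv h c' tm lg q (cH c' q) (cL c' q)" using I P2 H_inv_cong[OF g(1)] g(3,4) by (cases "q = p") (simp_all add: U_inv_def)
  show "local_inv \<delta> s0 h c' tm lg (cL c' q)" using I P3 local_inv_cong[OF g(1) f g(2) g(3)] g(4) by (cases "q = p") (simp_all add: U_inv_def)
qed

lemma A_inv_announce:
  assumes I: "U_inv \<delta> s0 h c tm lg" and pc: "3 \<le> pc_of c p" and f: "\<not> unannounced c' p (ticket_of c p)"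
  and cc: "cC c' = cC c"
  shows "A_inv h c' tm (ticket_of c p, Op (l_op (cL c p)), HP p)"
proof -
  note inv = U_invD[OF I]
  obtain a where a: "pending h a" "h!a = Inv p (l_op (cL c p))" "issued c (ticket_of c p)" "tm (ticket_of c p) = a"
    using inv(2)[of p] pc by (auto simp: pc_inv_def)
  thus ?thesis using f issued_cong[OF cc] by (simp add: A_inv_def ticket_proc_def ticket_op_def inv_op_def)
qed

lemma U_inv_event_step:
  assumes I: "U_inv \<delta> s0 h c tm lg" and e: "ev_proc e = p"
    and pc: "l_pc (cL c p) \<noteq> 3" "l_pc l' \<noteq> 3"
    and hist: "hist_inv (h @ [e]) tm lg"
    and P1: "pc_inv (h @ [e]) c tm p l'" and P2: "H_inv h c tm lg p (cH c p) l'"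
    and P3: "local_inv \<delta> s0 h c tm lg l'"
  shows "U_inv \<delta> s0 (h @ [e]) (updL c p (\<lambda>_. l')) tm lg"
    (is "U_inv _ _ ?h ?c _ _")
proof -
  note inv = U_invD[OF I]
  have f: "unannounced ?c = unannounced c" by (rule unannounced_upd[where p = p and l' = l']) (use pc in auto)
  have cc: "cC ?c = cC c" "cH ?c = cH c" "cS ?c = cS c" by simp_all
  show ?thesis unfolding U_inv_def
  proof (intro conjI allI)
    show "ticket_inv ?h ?c tm" using ticket_inv_snoc[OF inv(1)] ticket_inv_cong[OF cc(1)] by simp
    show "hist_inv ?h tm lg" by (rule hist)
    show "log_inv \<delta> s0 ?h ?c tm lg" using log_inv_snoc[OF inv(1) inv(4)] log_inv_cong[OF cc(1) f cc(3)] by simp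
    show "log_H_written ?c lg" using inv(6) log_H_written_cong[OF cc(2)] by simp
    show "A_inv ?h ?c tm (cA ?c)" using A_inv_snoc[OF inv(1) inv(7)] A_inv_cong[OF cc(1) f] by simp
    fix q
    show "pc_inv ?h ?c tm q (cL ?c q)"
      using pc_inv_snoc_other[OF inv(2)[of q], of e] P1 e pc_inv_cong[OF cc(1)] by (cases "q = p") simp_all
    show "H_inv ?h ?c tm lg q (cH ?c q) (cL ?c q)"
      using H_inv_snoc[OF inv(1) inv(5)[of q]] H_inv_snoc[OF inv(1) P2] H_inv_cong[OF cc(1)] by (cases "q = p") simp_all
    show "local_inv \<delta> s0 ?h ?c tm lg (cL ?c q)"
      using local_inv_snoc[OF inv(1) inv(8)[of q]] local_inv_snoc[OF inv(1) P3]
        local_inv_cong[OF cc(1) f cc(3) cc(2)] by (cases "q = p") simp_all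
  qed
qed

lemma U_inv_H_write_step:
  assumes I: "U_inv \<delta> s0 h c tm lg"
    and g: "cC c' = cC c" "cS c' = cS c" "cA c' = cA c" "cL c' = (cL c)(p := l')"
    and f: "\<forall>q t. unannounced c' q t \<longrightarrow> unannounced c q t" and N: "no_new_null c c' lg"
    and H: "\<And>q. H_inv h c' tm lg q (cH c' q) (cL c' q)"
    and P1: "pc_inv h c tm p l'" and P3: "local_inv \<delta> s0 h c' tm lg l'"
  shows "U_inv \<delta> s0 h c' tm lg"
  unfolding U_inv_def
proof (intro conjI allI)
  note inv = U_invD[OF I]
  show "ticket_inv h c' tm" using inv(1) ticket_inv_cong[OF g(1)] by simp
  show "hist_inv h tm lg" by (rule inv(3))
  show "log_inv \<delta> s0 h c' tm lg" using log_inv_weaken[OF inv(4) g(1,2) f] .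
  show "log_H_written c' lg" using log_H_written_weaken[OF inv(6) N] .
  show "A_inv h c' tm (cA c')" using A_inv_weaken[OF inv(7) g(1) f] g(3) by simp
  fix q
  show "pc_inv h c' tm q (cL c' q)" using inv(2)[of q] P1 pc_inv_cong[OF g(1)] g(4) by (cases "q = p") simp_all
  show "H_inv h c' tm lg q (cH c' q) (cL c' q)" by (rule H)
  show "local_inv \<delta> s0 h c' tm lg (cL c' q)"
    using local_inv_weaken[OF inv(8)[of q] g(1,2) f N] P3 g(4) by (cases "q = p") simp_all
qed

lemma U_inv_line1:
  assumes I: "U_inv \<delta> s0 h c tm lg" and pc: "pc_of c p = 0"
  shows "U_inv \<delta> s0 (h @ [Inv p oo]) (updL c p (\<lambda>l. l\<lparr>l_pc := 2, l_op := oo\<rparr>)) tm lg"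
proof -
  let ?l' = "(cL c p)\<lparr>l_pc := 2, l_op := oo\<rparr>"
  note inv = U_invD[OF I]
  have ev: "even (length (proj p h))" using inv(2)[of p] pc by (auto simp: pc_inv_def)
  have "\<forall>t. issued c t \<longrightarrow> tm t \<noteq> length h" using inv(1) by (auto simp: ticket_inv_def)
  moreover have "pending (h @ [Inv p oo]) (length h)" by (simp add: pending_snoc)
  ultimately have "pc_inv (h @ [Inv p oo]) c tm p ?l'" using ev unfolding pc_inv_def by (auto simp: proj_single)
  moreover have "H_inv h c tm lg p (cH c p) ?l'" using inv(5)[of p] pc by (auto simp: H_inv_def)
  ultimately have "U_inv \<delta> s0 (h @ [Inv p oo]) (updL c p (\<lambda>_. ?l')) tm lg"
    using U_inv_event_step[OF I _ _ _ hist_inv_snoc_Inv[OF inv(3) ev]] pc by (simp add: local_inv_def)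
  then show ?thesis by (simp add: updL_def)
qed

locale ticket_draw =
  fixes \<delta> :: "('s \<times> 'o \<times> 's \<times> 'r) set" and s0 :: 's and h :: "('p,'o,'r) event list"
    and c :: "('p,'o,'r,'s) conf" and tm :: "nat \<Rightarrow> nat" and lg :: "('p,'r,'s) entry list"
    and p :: 'p and a :: nat
  assumes inv: "U_inv \<delta> s0 h c tm lg" and pc: "pc_of c p = 2"
    and a: "pending h a" "h!a = Inv p (l_op (cL c p))" "\<And>t. issued c t \<Longrightarrow> tm t \<noteq> a"
begin

definition c' :: "('p,'o,'r,'s) conf" where
  "c' = updL (c\<lparr>cC := cC c + 1\<rparr>) p (\<lambda>l. l\<lparr>l_pc := 3, l_t := cC c\<rparr>)"

definition tm' :: "nat \<Rightarrow> nat" where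
  "tm' = tm(cC c := a)"

lemma issued_c': "issued c' t \<longleftrightarrow> issued c t \<or> t = cC c"
  using U_invD(1)[OF inv] by (auto simp: c'_def issued_def ticket_inv_def)

lemma issued_new: "issued c t \<Longrightarrow> t \<noteq> cC c"
  by (simp add: issued_def)

lemma tm'_old: "issued c t \<Longrightarrow> tm' t = tm t"
  by (simp add: tm'_def issued_def)

lemma ticket_proc_op_old:
  "issued c t \<Longrightarrow> ticket_proc h tm' t = ticket_proc h tm t"
  "issued c t \<Longrightarrow> ticket_op h tm' t = ticket_op h tm t"
  using tm'_old by (simp_all add: ticket_proc_def ticket_op_def)

lemma ticket_proc_new: "ticket_proc h tm' (cC c) = p"
  using a by (simp add: tm'_def ticket_proc_def)

lemma unannounced_c': "unannounced c' q t \<Longrightarrow> unannounced c q t \<or> (q = p \<and> t = cC c)"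
  by (auto simp: c'_def unannounced_def split: if_splits)

lemma ticket_inv_c': "ticket_inv h c' tm'"
proof -
  have T: "ticket_inv h c tm" by (rule U_invD(1)[OF inv])
  have "{t. issued c' t} = insert (cC c) {t. issued c t}" using issued_c' by auto
  moreover have "inj_on tm' {t. issued c t}"
    using T tm'_old unfolding ticket_inv_def inj_on_def by auto
  moreover have "tm' (cC c) \<notin> tm' ` ({t. issued c t} - {cC c})"
    using a(3) tm'_old by (auto simp: tm'_def)
  moreover have "a < length h" "is_inv (h!a)" using a unfolding pending_def by auto
  ultimately show ?thesis
    using T issued_c' tm'_old by (auto simp: ticket_inv_def c'_def tm'_def)
qed

lemma A_inv_c': "A_inv h c tm x \<Longrightarrow> A_inv h c' tm' x"
  unfolding A_inv_def using issued_c' ticket_proc_op_old issued_new unannounced_c' by metis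

lemma log_inv_c': "log_inv \<delta> s0 h c' tm' lg"
proof -
  have L: "log_inv \<delta> s0 h c tm lg" by (rule U_invD(4)[OF inv])
  then have "\<not> unannounced c' (e_proc e) (e_time e)" if "e \<in> set lg" for e
    using that unannounced_c' issued_new by (fastforce simp: log_inv_def)
  then show ?thesis
    using L issued_c' ticket_proc_op_old tm'_old nth_mem
    by (simp add: log_inv_def c'_def)
qed

lemma pc_inv_c': "pc_inv h c' tm' q (cL c' q)"
proof (cases "q = p")
  case True
  then show ?thesis using U_invD(2)[OF inv, of p] pc a issued_c' by (auto simp: pc_inv_def tm'_def c'_def)
next
  case False
  let ?x = "cL c q"
  have old: "pc_inv h c tm q ?x" by (rule U_invD(2)[OF inv])
  have "\<exists>b. pending h b \<and> h!b = Inv q (l_op ?x)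
          \<and> (l_pc ?x = 2 \<longrightarrow> (\<forall>t. issued c' t \<longrightarrow> tm' t \<noteq> b))
          \<and> (3 \<le> l_pc ?x \<longrightarrow> issued c' (l_t ?x) \<and> tm' (l_t ?x) = b)" if nz: "l_pc ?x \<noteq> 0"
  proof -
    obtain b where b: "pending h b" "h!b = Inv q (l_op ?x)"
      "l_pc ?x = 2 \<longrightarrow> (\<forall>t. issued c t \<longrightarrow> tm t \<noteq> b)"
      "3 \<le> l_pc ?x \<longrightarrow> issued c (l_t ?x) \<and> tm (l_t ?x) = b"
      using old nz unfolding pc_inv_def by auto
    have "a \<noteq> b" using a(2) b(2) False by auto
    then have "l_pc ?x = 2 \<longrightarrow> (\<forall>t. issued c' t \<longrightarrow> tm' t \<noteq> b)"
      using issued_c' b(3) tm'_old by (auto simp: tm'_def)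
    then show ?thesis using b issued_c' tm'_old by blast
  qed
  then have "pc_inv h c' tm' q ?x" using old unfolding pc_inv_def by blast
  then show ?thesis using False by (simp add: c'_def)
qed

lemma H_inv_c': "H_inv h c' tm' lg q (cH c' q) (cL c' q)"
proof -
  have old: "H_inv h c tm lg q (cH c q) (cL c q)" by (rule U_invD(5)[OF inv])
  have old_Null: "3 \<le> pc_of c q \<and> pc_of c q \<le> 13 \<and> ticket_of c q = t"
    if "cH c q = (t, Null)" "issued c t" "ticket_proc h tm t = q" for t
    using old that unfolding H_inv_def by blast
  show ?thesis
  proof (cases "q = p")
    case True
    have "t = cC c" if "cH c q = (t, Null)" "issued c' t" "ticket_proc h tm' t = q" for t
      using that old_Null[of t] pc True issued_c' ticket_proc_op_old by fastforce
    then show ?thesis using True by (simp add: H_inv_def c'_def) metis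
  next
    case False
    have "cL c' q = cL c q" "cH c' q = cH c q" using False by (simp_all add: c'_def)
    moreover have "issued c t" if "issued c' t" "ticket_proc h tm' t = q" for t
      using that issued_c' ticket_proc_new False by blast
    ultimately show ?thesis using old ticket_proc_op_old unfolding H_inv_def by metis
  qed
qed

lemma local_inv_c': "local_inv \<delta> s0 h c' tm' lg (cL c' q)"
proof (cases "q = p")
  case True
  then show ?thesis by (simp add: local_inv_def c'_def)
next
  case False
  let ?x = "cL c q"
  have P: "local_inv \<delta> s0 h c tm lg ?x" by (rule U_invD(8)[OF inv])
  have "ticket_op h tm' (l_t1 ?x) = ticket_op h tm (l_t1 ?x)" if "l_pc ?x = 12"
  proof -
    have "A_inv h c tm (A_read ?x)" "1 \<le> l_t1 ?x" using P that by (auto simp: local_inv_def)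
    then have "issued c (l_t1 ?x)" by (auto simp: A_inv_def A_read_def)
    then show ?thesis by (rule ticket_proc_op_old)
  qed
  then show ?thesis using P False A_inv_c' unfolding local_inv_def by (simp add: c'_def)
qed

lemma U_inv_c': "U_inv \<delta> s0 h c' tm' lg"
proof -
  have "hist_inv h tm' lg"
    using U_invD(3,4)[OF inv] tm'_old unfolding hist_inv_def log_inv_def by (metis (no_types, lifting))
  moreover have "log_H_written c' lg" using U_invD(6)[OF inv] by (simp add: log_H_written_def c'_def)
  moreover have "A_inv h c' tm' (cA c')" using A_inv_c' U_invD(7)[OF inv] by (simp add: c'_def)
  ultimately show ?thesis
    using ticket_inv_c' log_inv_c' pc_inv_c' H_inv_c' local_inv_c' by (simp add: U_inv_def)
qed

end

lemma U_inv_line2: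
  assumes I: "U_inv \<delta> s0 h c tm lg" and pc: "pc_of c p = 2"
  shows "\<exists>tm'. U_inv \<delta> s0 h (updL (c\<lparr>cC := cC c + 1\<rparr>) p (\<lambda>l. l\<lparr>l_pc := 3, l_t := cC c\<rparr>)) tm' lg"
proof -
  obtain a where "pending h a" "h!a = Inv p (l_op (cL c p))" "\<And>t. issued c t \<Longrightarrow> tm t \<noteq> a"
    using U_invD(2)[OF I, of p] pc by (auto simp: pc_inv_def)
  then interpret ticket_draw \<delta> s0 h c tm lg p a using I pc by unfold_locales
  show ?thesis using U_inv_c' unfolding c'_def by blast
qed

lemma U_inv_line3:
  assumes I: "U_inv \<delta> s0 h c tm lg" and pc: "pc_of c p = 3"
  shows "U_inv \<delta> s0 h (updL (c\<lparr>cH := (cH c)(p := (l_t (cL c p), Null))\<rparr>) p (\<lambda>l. l\<lparr>l_pc := 4\<rparr>)) tm lg"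
    (is "U_inv _ _ _ ?c _ _")
proof (rule U_inv_H_write_step[OF I, where p = p and l' = "(cL c p)\<lparr>l_pc := 4\<rparr>"])
  note inv = U_invD[OF I]
  show "\<forall>q t. unannounced ?c q t \<longrightarrow> unannounced c q t" by (auto simp: unannounced_def split: if_splits)
  show "no_new_null c ?c lg" unfolding no_new_null_def
  proof (intro ballI impI)
    fix E assume E: "E \<in> set lg" "cH ?c (e_proc E) = (e_time E, Null)"
    show "cH c (e_proc E) = (e_time E, Null)"
    proof (cases "e_proc E = p")
      case True
      then have "e_time E = ticket_of c p" using E by simp
      moreover have "\<not> unannounced c (e_proc E) (e_time E)" using inv(4) E by (auto simp: log_inv_def)
      ultimately show ?thesis using True pc by (simp add: unannounced_def)
    qed (use E in simp)
  qed
  show "H_inv h ?c tm lg q (cH ?c q) (cL ?c q)" for q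
    using inv(5)[of q] H_inv_cong[of ?c c] by (cases "q = p") (simp_all add: H_inv_def)
  show "pc_inv h c tm p ((cL c p)\<lparr>l_pc := 4\<rparr>)" using inv(2)[of p] pc by (auto simp: pc_inv_def)
qed (simp_all add: local_inv_def)

lemma U_inv_line4: assumes I: "U_inv \<delta> s0 h c tm lg" and pc: "pc_of c p = 4"
  shows "U_inv \<delta> s0 h (updL c p (\<lambda>l. l\<lparr>l_pc := (if cH c p = (l_t l, Null) then 5 else 14)\<rparr>)) tm lg"
proof -
  let ?l = "(cL c p)\<lparr>l_pc := (if cH c p = (ticket_of c p, Null) then 5 else 14)\<rparr>"
  note inv = U_invD[OF I]
  show ?thesis
  proof (rule U_inv_local_step[OF I, where l' = ?l and p = p])
    show "unannounced (updL c p (\<lambda>l. l\<lparr>l_pc := (if cH c p = (l_t l, Null) then 5 else 14)\<rparr>)) = unannounced c"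
      by (rule unannounced_upd[where p = p and l' = ?l]) (use pc in auto)
    show "pc_inv h c tm p ?l"
      by (cases "cH c p = (ticket_of c p, Null)") (use inv(2)[of p] pc in \<open>simp_all add: pc_inv_def\<close>)
    show "H_inv h c tm lg p (cH c p) ?l"
    proof (cases "cH c p = (ticket_of c p, Null)")
      case True then show ?thesis using inv(5)[of p] pc by (simp add: H_inv_def)
    next
      case False
      have "\<And>t. cH c p = (t, Null) \<Longrightarrow> issued c t \<Longrightarrow> ticket_proc h tm t = p \<Longrightarrow> False"
        using inv(5)[of p] pc False unfolding H_inv_def by force
      then show ?thesis using inv(5)[of p] pc False unfolding H_inv_def by auto
    qed
    show "local_inv \<delta> s0 h c tm lg ?l" by (simp add: local_inv_def)
  qed (simp_all add: inv(7))
qed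

lemma U_inv_line5:
  assumes I: "U_inv \<delta> s0 h c tm lg" and pc: "pc_of c p = 5" and S: "cS c = (t, s, r, x)"
  shows "U_inv \<delta> s0 h (updL c p (\<lambda>l. l\<lparr>l_pc := 6, l_ts := t, l_ss := s, l_rs := r, l_ps := x\<rparr>)) tm lg"
proof -
  let ?l = "(cL c p)\<lparr>l_pc := 6, l_ts := t, l_ss := s, l_rs := r, l_ps := x\<rparr>"
  note inv = U_invD[OF I]
  have S': "cS c = S_of_log s0 lg (length lg)" using inv(4) by (simp add: log_inv_def)
  show ?thesis
  proof (rule U_inv_local_step[OF I, where l' = ?l and p = p])
    show "unannounced (updL c p (\<lambda>l. l\<lparr>l_pc := 6, l_ts := t, l_ss := s, l_rs := r, l_ps := x\<rparr>)) = unannounced c"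
      by (rule unannounced_upd[where p = p and l' = ?l]) (use pc in auto)
    show "pc_inv h c tm p ?l" using inv(2)[of p] pc by (auto simp: pc_inv_def)
    show "H_inv h c tm lg p (cH c p) ?l" using inv(5)[of p] pc by (auto simp: H_inv_def)
    show "local_inv \<delta> s0 h c tm lg ?l" using S S' by (auto simp: local_inv_def S_read_def)
  qed (simp_all add: inv(7))
qed

lemma U_inv_line6:
  assumes I: "U_inv \<delta> s0 h c tm lg" and pc: "pc_of c p = 6"
  shows "U_inv \<delta> s0 h (updL (c\<lparr>cH := gcas_ptr c (l_ps (cL c p)) (l_ts (cL c p), Null) (l_ts (cL c p), l_rs (cL c p))\<rparr>) p
          (\<lambda>l. l\<lparr>l_pc := 7\<rparr>)) tm lg" (is "U_inv _ _ _ ?c _ _")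
proof (rule U_inv_H_write_step[OF I, where p = p and l' = "(cL c p)\<lparr>l_pc := 7\<rparr>"])
  let ?l = "cL c p"
  let ?G = "gcas_ptr c (l_ps ?l) (l_ts ?l, Null) (l_ts ?l, l_rs ?l)"
  note inv = U_invD[OF I]
  obtain k where k: "k \<le> length lg" "S_read ?l = S_of_log s0 lg k" using inv(8)[of p] pc by (auto simp: local_inv_def)
  have G: "\<And>q. ?G q = cH c q \<or> (\<exists>E\<in>set lg. cH c q = (e_time E, Null) \<and> ?G q = (e_time E, Resp (e_resp E)))"
    using gcas_ptr_cases[OF k(2) k(1)] by blast
  show "\<forall>q t. unannounced ?c q t \<longrightarrow> unannounced c q t" using pc by (auto simp: unannounced_def)
  show "no_new_null c ?c lg"
    unfolding no_new_null_def using G by auto (metis rval.distinct(1) rval.distinct(3) prod.inject)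
  show "H_inv h ?c tm lg q (cH ?c q) (cL ?c q)" for q
  proof -
    have "H_inv h c tm lg q (cH c q) (cL ?c q)" using inv(5)[of q] pc by (cases "q = p") (auto simp: H_inv_def)
    then have "H_inv h c tm lg q (?G q) (cL ?c q)" using H_inv_gcas[OF _ G[of q]] by blast
    then show ?thesis using H_inv_cong[of ?c c] by simp
  qed
  show "pc_inv h c tm p (?l\<lparr>l_pc := 7\<rparr>)" using inv(2)[of p] pc by (auto simp: pc_inv_def)
  txt \<open>If S has not moved since line 5, the GCAS just performed wrote the response of the
    last log entry.\<close>
  have "cH ?c (e_proc (last lg)) \<noteq> (e_time (last lg), Null)" if "S_read ?l = cS c" "lg \<noteq> []"
  proof -
    have "cS c = S_of_log s0 lg (length lg)" using inv(4) by (simp add: log_inv_def)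
    then have "l_ps ?l = HP (e_proc (last lg))" "l_ts ?l = e_time (last lg)" "l_rs ?l = Resp (e_resp (last lg))"
      using that by (simp_all add: S_read_def S_of_log_def last_conv_nth)
    then show ?thesis by (simp add: gcas_ptr_def)
  qed
  moreover have "S_read (?l\<lparr>l_pc := 7\<rparr>) = S_read ?l" by (simp add: S_read_def)
  ultimately show "local_inv \<delta> s0 h ?c tm lg (?l\<lparr>l_pc := 7\<rparr>)" unfolding local_inv_def using k by auto
qed simp_all

lemma U_inv_line7: assumes I: "U_inv \<delta> s0 h c tm lg" and pc: "pc_of c p = 7"
  shows "U_inv \<delta> s0 h (updL (c\<lparr>cA := (if fst (cA c) > l_t (cL c p) then (l_t (cL c p), Op (l_op (cL c p)), HP p) else cA c)\<rparr>) p
          (\<lambda>l. l\<lparr>l_pc := 8\<rparr>)) tm lg" (is "U_inv _ _ _ ?c _ _")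
proof -
  let ?l = "(cL c p)\<lparr>l_pc := 8\<rparr>"
  note inv = U_invD[OF I]
  have f: "unannounced ?c = unannounced c" by (rule unannounced_upd[where p = p and l' = ?l]) (use pc in auto)
  show ?thesis
  proof (rule U_inv_local_step[OF I, where l' = ?l and p = p])
    show "unannounced ?c = unannounced c" by (rule f)
    have nv: "A_inv h c tm (ticket_of c p, Op (l_op (cL c p)), HP p)"
      by (rule A_inv_announce[OF I]) (use pc in \<open>auto simp: unannounced_def\<close>)
    show "A_inv h c tm (cA ?c)" using inv(7) nv by simp
    show "pc_inv h c tm p ?l" using inv(2)[of p] pc by (auto simp: pc_inv_def)
    show "H_inv h c tm lg p (cH c p) ?l" using inv(5)[of p] pc by (auto simp: H_inv_def)
    show "local_inv \<delta> s0 h c tm lg ?l" using inv(8)[of p] pc by (auto simp: local_inv_def S_read_def)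
  qed (simp_all add: inv(7))
qed

lemma U_inv_line8:
  assumes I: "U_inv \<delta> s0 h c tm lg" and pc: "pc_of c p = 8" and A: "cA c = (t, oo, x)"
  shows "U_inv \<delta> s0 h (updL c p (\<lambda>l. l\<lparr>l_pc := 9, l_t1 := t, l_o1 := oo, l_p1 := x\<rparr>)) tm lg"
proof -
  let ?l = "(cL c p)\<lparr>l_pc := 9, l_t1 := t, l_o1 := oo, l_p1 := x\<rparr>"
  note inv = U_invD[OF I]
  show ?thesis
  proof (rule U_inv_local_step[OF I, where l' = ?l and p = p])
    show "unannounced (updL c p (\<lambda>l. l\<lparr>l_pc := 9, l_t1 := t, l_o1 := oo, l_p1 := x\<rparr>)) = unannounced c"
      by (rule unannounced_upd[where p = p and l' = ?l]) (use pc in auto)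
    show "pc_inv h c tm p ?l" using inv(2)[of p] pc by (auto simp: pc_inv_def)
    show "H_inv h c tm lg p (cH c p) ?l" using inv(5)[of p] pc by (auto simp: H_inv_def)
    show "local_inv \<delta> s0 h c tm lg ?l" using inv(8)[of p] inv(7) pc A by (auto simp: local_inv_def S_read_def A_read_def)
  qed (simp_all add: inv(7))
qed

text \<open>Why no operation is applied twice: an announcement whose H still holds (t, NULL) is
  either not logged, or it is the last log entry and S has moved on since it was read, because
  every other logged operation has had its response written back.\<close>
lemma null_announcement_unlogged:
  assumes I: "U_inv \<delta> s0 h c tm lg" and pc: "pc_of c p = 9"
    and d: "deref c (l_p1 (cL c p)) = (l_t1 (cL c p), Null)"
  shows "1 \<le> l_t1 (cL c p) \<and> (l_t1 (cL c p) \<notin> e_time ` set lg \<or> S_read (cL c p) \<noteq> cS c)"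
proof -
  let ?t = "l_t1 (cL c p)"
  note inv = U_invD[OF I]
  have "A_inv h c tm (A_read (cL c p))" using inv(8)[of p] pc by (simp add: local_inv_def)
  moreover have "A_read (cL c p) \<noteq> (0, NOOP, HNoop)" using d by (auto simp: A_read_def deref_HNoop)
  ultimately have v: "issued c ?t" "l_p1 (cL c p) = HP (ticket_proc h tm ?t)"
    by (auto simp: A_inv_def A_read_def)
  have Hq: "cH c (ticket_proc h tm ?t) = (?t, Null)" using d v by (simp add: deref_HP)
  have "\<not> (?t \<in> e_time ` set lg \<and> S_read (cL c p) = cS c)"
  proof
    assume a: "?t \<in> e_time ` set lg \<and> S_read (cL c p) = cS c"
    then obtain j where j: "j < length lg" "e_time (lg!j) = ?t" by (metis imageE in_set_conv_nth)
    have proc: "e_proc (lg!j) = ticket_proc h tm ?t" using inv(4) j by (auto simp: log_inv_def)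
    show False
    proof (cases "Suc j < length lg")
      case True
      then show False using inv(6) j proc Hq by (auto simp: log_H_written_def)
    next
      case False
      then have "j = length lg - 1" "lg \<noteq> []" using j by auto
      then have "lg!j = last lg" "lg \<noteq> []" by (simp_all add: last_conv_nth)
      moreover have "lg \<noteq> [] \<longrightarrow> cH c (e_proc (last lg)) \<noteq> (e_time (last lg), Null)"
        using inv(8)[of p] pc a by (simp add: local_inv_def)
      ultimately show False using j proc Hq by auto
    qed
  qed
  then show ?thesis using v by (auto simp: issued_def)
qed

lemma U_inv_line9:
  assumes I: "U_inv \<delta> s0 h c tm lg" and pc: "pc_of c p = 9"
  shows "U_inv \<delta> s0 h (updL c p (\<lambda>l. l\<lparr>l_pc := (if deref c (l_p1 l) = (l_t1 l, Null) then 11 else 13)\<rparr>)) tm lg"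
proof -
  let ?l = "(cL c p)\<lparr>l_pc := (if deref c (l_p1 (cL c p)) = (l_t1 (cL c p), Null) then 11 else 13)\<rparr>"
  note inv = U_invD[OF I]
  show ?thesis
  proof (rule U_inv_local_step[OF I, where l' = ?l and p = p])
    show "unannounced (updL c p (\<lambda>l. l\<lparr>l_pc := (if deref c (l_p1 l) = (l_t1 l, Null) then 11 else 13)\<rparr>)) = unannounced c"
      by (rule unannounced_upd[where p = p and l' = ?l]) (use pc in auto)
    show "pc_inv h c tm p ?l" using inv(2)[of p] pc by (auto simp: pc_inv_def)
    show "H_inv h c tm lg p (cH c p) ?l" using inv(5)[of p] pc by (auto simp: H_inv_def)
    show "local_inv \<delta> s0 h c tm lg ?l"
      using inv(8)[of p] pc null_announcement_unlogged[OF I pc] by (auto simp: local_inv_def S_read_def A_read_def)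
  qed (simp_all add: inv(7))
qed

lemma U_inv_line11:
  assumes I: "U_inv \<delta> s0 h c tm lg" and pc: "pc_of c p = 11" and op: "l_o1 (cL c p) = Op oo"
  and d: "(l_ss (cL c p), oo, s', r') \<in> \<delta>"
  shows "U_inv \<delta> s0 h (updL c p (\<lambda>l. l\<lparr>l_pc := 12, l_s1 := s', l_r1 := Resp r'\<rparr>)) tm lg"
proof -
  let ?l = "(cL c p)\<lparr>l_pc := 12, l_s1 := s', l_r1 := Resp r'\<rparr>"
  note inv = U_invD[OF I]
  have "A_inv h c tm (A_read (cL c p))" using inv(8)[of p] pc by (simp add: local_inv_def)
  hence "oo = ticket_op h tm (l_t1 (cL c p))" using op by (auto simp: A_inv_def A_read_def)
  show ?thesis
  proof (rule U_inv_local_step[OF I, where l' = ?l and p = p])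
    show "unannounced (updL c p (\<lambda>l. l\<lparr>l_pc := 12, l_s1 := s', l_r1 := Resp r'\<rparr>)) = unannounced c"
      by (rule unannounced_upd[where p = p and l' = ?l]) (use pc in auto)
    show "pc_inv h c tm p ?l" using inv(2)[of p] pc by (auto simp: pc_inv_def)
    show "H_inv h c tm lg p (cH c p) ?l" using inv(5)[of p] pc by (auto simp: H_inv_def)
    show "local_inv \<delta> s0 h c tm lg ?l" using inv(8)[of p] pc d \<open>oo = _\<close> by (auto simp: local_inv_def S_read_def A_read_def)
  qed (simp_all add: inv(7))
qed

locale S_install =
  fixes \<delta> :: "('s \<times> 'o \<times> 's \<times> 'r) set" and s0 :: 's and h :: "('p,'o,'r) event list"
    and c :: "('p,'o,'r,'s) conf" and tm :: "nat \<Rightarrow> nat" and lg :: "('p,'r,'s) entry list"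
    and p :: 'p and r :: 'r
  assumes inv: "U_inv \<delta> s0 h c tm lg" and pc: "pc_of c p = 12"
    and S_unchanged: "cS c = S_read (cL c p)" and resp: "l_r1 (cL c p) = Resp r"
begin

definition c' :: "('p,'o,'r,'s) conf" where
  "c' = updL (c\<lparr>cS := (l_t1 (cL c p), l_s1 (cL c p), l_r1 (cL c p), l_p1 (cL c p))\<rparr>) p (\<lambda>l. l\<lparr>l_pc := 4\<rparr>)"

definition new_entry :: "('p,'r,'s) entry" where
  "new_entry = \<lparr>e_time = l_t1 (cL c p), e_proc = ticket_proc h tm (l_t1 (cL c p)), e_bound = length h,
                 e_resp = r, e_state = l_s1 (cL c p)\<rparr>"

definition lg' :: "('p,'r,'s) entry list" where
  "lg' = lg @ [new_entry]"

lemma local_facts: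
  "1 \<le> l_t1 (cL c p)" "l_t1 (cL c p) \<notin> e_time ` set lg"
  "lg \<noteq> [] \<Longrightarrow> cH c (e_proc (last lg)) \<noteq> (e_time (last lg), Null)"
  "(l_ss (cL c p), ticket_op h tm (l_t1 (cL c p)), l_s1 (cL c p), r) \<in> \<delta>"
  "A_inv h c tm (A_read (cL c p))"
  using U_invD(8)[OF inv, of p] pc S_unchanged resp by (auto simp: local_inv_def)

lemma announced:
  "issued c (l_t1 (cL c p))" "l_p1 (cL c p) = HP (ticket_proc h tm (l_t1 (cL c p)))"
  "\<not> unannounced c (ticket_proc h tm (l_t1 (cL c p))) (l_t1 (cL c p))"
  using local_facts(1,5) by (auto simp: A_inv_def A_read_def)

lemma unannounced_c': "unannounced c' = unannounced c"
  by (rule unannounced_upd[where p = p and l' = "(cL c p)\<lparr>l_pc := 4\<rparr>"]) (use pc in \<open>auto simp: c'_def\<close>)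

lemma cS_c': "cS c' = S_of_log s0 lg' (length lg')"
  using resp announced by (simp add: c'_def lg'_def new_entry_def S_of_log_def)

lemma old_S_differs: "k \<le> length lg \<Longrightarrow> S_of_log s0 lg k \<noteq> cS c'"
  using time_S_of_log[of k lg s0] local_facts(1,2) by (auto simp: c'_def)

lemma log_inv_c': "log_inv \<delta> s0 h c' tm lg'"
proof -
  have L: "log_inv \<delta> s0 h c tm lg" by (rule U_invD(4)[OF inv])
  have "tm (l_t1 (cL c p)) < length h"
    using U_invD(1)[OF inv] announced(1) by (simp add: ticket_inv_def)
  then have entries: "\<forall>e\<in>set lg'. issued c (e_time e) \<and> e_proc e = ticket_proc h tm (e_time e)
      \<and> \<not> unannounced c (e_proc e) (e_time e) \<and> tm (e_time e) < e_bound e \<and> e_bound e \<le> length h"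
    using L announced by (auto simp: log_inv_def lg'_def new_entry_def)
  have "e_bound (lg'!i) \<le> e_bound (lg'!j)" if "i \<le> j" "j < length lg'" for i j
    using that L entries by (cases "j < length lg") (auto simp: log_inv_def lg'_def nth_append new_entry_def)
  moreover have "(log_state s0 lg' i, ticket_op h tm (e_time (lg'!i)), e_state (lg'!i), e_resp (lg'!i)) \<in> \<delta>"
    if "i < length lg'" for i
  proof (cases "i < length lg")
    case True
    then show ?thesis using L log_state_append[of i lg s0 new_entry] by (simp add: log_inv_def lg'_def nth_append)
  next
    case False
    then have i: "i = length lg" using that by (simp add: lg'_def)
    have "log_state s0 lg' i = fst (snd (S_of_log s0 lg (length lg)))"
      using i log_state_append[of "length lg" lg s0 new_entry] state_S_of_log[of "length lg" lg s0]
      by (simp add: lg'_def)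
    also have "\<dots> = l_ss (cL c p)"
      using L S_unchanged unfolding log_inv_def S_read_def by (metis fst_conv snd_conv)
    finally show ?thesis using i local_facts(4) by (simp add: lg'_def new_entry_def)
  qed
  moreover have "distinct (map e_time lg')" using L local_facts(2) by (simp add: log_inv_def lg'_def new_entry_def)
  moreover have "issued c' = issued c" by (rule issued_cong) (simp add: c'_def)
  ultimately show ?thesis
    using entries cS_c' unfolding log_inv_def unannounced_c' by auto
qed

lemma log_H_written_c': "log_H_written c' lg'"
  unfolding log_H_written_def
proof (intro allI impI)
  fix j assume j: "Suc j < length lg'"
  show "cH c' (e_proc (lg'!j)) \<noteq> (e_time (lg'!j), Null)"
  proof (cases "Suc j < length lg")
    case True
    then show ?thesis using U_invD(6)[OF inv] by (simp add: log_H_written_def lg'_def nth_append c'_def)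
  next
    case False
    then have "j = length lg - 1" "lg \<noteq> []" using j by (auto simp: lg'_def)
    then have "lg'!j = last lg" "lg \<noteq> []" by (simp_all add: lg'_def nth_append last_conv_nth)
    then show ?thesis using local_facts(3) by (simp add: c'_def)
  qed
qed

lemma local_inv_c': "local_inv \<delta> s0 h c' tm lg' (cL c' q)"
proof (cases "q = p")
  case True
  then show ?thesis by (simp add: local_inv_def c'_def)
next
  case False
  let ?x = "cL c q"
  have P: "local_inv \<delta> s0 h c tm lg ?x" by (rule U_invD(8)[OF inv])
  have R: "\<exists>k\<le>length lg. S_read ?x = S_of_log s0 lg k" if "6 \<le> l_pc ?x" "l_pc ?x \<le> 13"
    using P that by (simp add: local_inv_def)
  then have "\<exists>k\<le>length lg'. S_read ?x = S_of_log s0 lg' k" if "6 \<le> l_pc ?x" "l_pc ?x \<le> 13"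
    using that S_of_log_append by (metis lg'_def le_SucI length_append_singleton)
  moreover have "S_read ?x \<noteq> cS c'" if "6 \<le> l_pc ?x" "l_pc ?x \<le> 13"
    using R[OF that] old_S_differs by metis
  moreover have "A_inv h c' tm = A_inv h c tm"
    using A_inv_cong[OF _ unannounced_c'] by (simp add: c'_def)
  ultimately show ?thesis using P False unfolding local_inv_def by (auto simp: c'_def)
qed

lemma U_inv_c': "U_inv \<delta> s0 h c' tm lg'"
proof -
  have "ticket_inv h c' tm" using U_invD(1)[OF inv] ticket_inv_cong[of c' c] by (simp add: c'_def)
  moreover have "hist_inv h tm lg'" using U_invD(3)[OF inv] unfolding hist_inv_def lg'_def by auto
  moreover have "A_inv h c' tm (cA c')"
    using U_invD(7)[OF inv] A_inv_cong[OF _ unannounced_c'] by (simp add: c'_def)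
  moreover have "pc_inv h c' tm q (cL c' q)" for q
    using U_invD(2)[OF inv, of q] pc pc_inv_cong[of c' c] by (cases "q = p") (auto simp: pc_inv_def c'_def)
  moreover have "H_inv h c' tm lg' q (cH c' q) (cL c' q)" for q
  proof -
    have "H_inv h c tm lg q (cH c q) (cL c' q)"
      using U_invD(5)[OF inv, of q] pc by (cases "q = p") (auto simp: H_inv_def c'_def)
    then have "H_inv h c tm lg' q (cH c q) (cL c' q)" by (rule H_inv_mono_log) (auto simp: lg'_def)
    then show ?thesis using H_inv_cong[of c' c] by (simp add: c'_def)
  qed
  ultimately show ?thesis using log_inv_c' log_H_written_c' local_inv_c' by (simp add: U_inv_def)
qed

end

lemma U_inv_line12:
  assumes I: "U_inv \<delta> s0 h c tm lg" and pc: "pc_of c p = 12"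
  shows "\<exists>lg'. U_inv \<delta> s0 h (updL (c\<lparr>cS := (if cS c = (l_ts (cL c p), l_ss (cL c p), l_rs (cL c p), l_ps (cL c p))
                         then (l_t1 (cL c p), l_s1 (cL c p), l_r1 (cL c p), l_p1 (cL c p)) else cS c)\<rparr>) p
          (\<lambda>l. l\<lparr>l_pc := 4\<rparr>)) tm lg'"
proof (cases "cS c = S_read (cL c p)")
  case True
  obtain r where "l_r1 (cL c p) = Resp r" using U_invD(8)[OF I, of p] pc by (auto simp: local_inv_def)
  then interpret S_install \<delta> s0 h c tm lg p r using I pc True by unfold_locales
  show ?thesis using U_inv_c' True unfolding c'_def S_read_def by auto
next
  case False
  let ?l' = "(cL c p)\<lparr>l_pc := 4\<rparr>"
  note inv = U_invD[OF I]
  have "U_inv \<delta> s0 h (updL c p (\<lambda>l. l\<lparr>l_pc := 4\<rparr>)) tm lg"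
  proof (rule U_inv_local_step[OF I, where l' = ?l' and p = p])
    show "unannounced (updL c p (\<lambda>l. l\<lparr>l_pc := 4\<rparr>)) = unannounced c"
      by (rule unannounced_upd[where p = p and l' = ?l']) (use pc in auto)
    show "pc_inv h c tm p ?l'" using inv(2)[of p] pc by (auto simp: pc_inv_def)
    show "H_inv h c tm lg p (cH c p) ?l'" using inv(5)[of p] pc by (auto simp: H_inv_def)
  qed (simp_all add: inv(7) local_inv_def)
  then show ?thesis using False by (auto simp: S_read_def)
qed

lemma U_inv_line13: assumes I: "U_inv \<delta> s0 h c tm lg" and pc: "pc_of c p = 13"
  shows "U_inv \<delta> s0 h (updL (c\<lparr>cA := (if cA c = A_read (cL c p) then (l_t (cL c p), Op (l_op (cL c p)), HP p) else cA c)\<rparr>) p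
          (\<lambda>l. l\<lparr>l_pc := 4\<rparr>)) tm lg" (is "U_inv _ _ _ ?c _ _")
proof -
  let ?l = "(cL c p)\<lparr>l_pc := 4\<rparr>"
  note inv = U_invD[OF I]
  have f: "unannounced ?c = unannounced c" by (rule unannounced_upd[where p = p and l' = ?l]) (use pc in auto)
  show ?thesis
  proof (rule U_inv_local_step[OF I, where l' = ?l and p = p])
    show "unannounced ?c = unannounced c" by (rule f)
    have nv: "A_inv h c tm (ticket_of c p, Op (l_op (cL c p)), HP p)"
      by (rule A_inv_announce[OF I]) (use pc in \<open>auto simp: unannounced_def\<close>)
    show "A_inv h c tm (cA ?c)" using inv(7) nv by simp
    show "pc_inv h c tm p ?l" using inv(2)[of p] pc by (auto simp: pc_inv_def)
    show "H_inv h c tm lg p (cH c p) ?l" using inv(5)[of p] pc by (auto simp: H_inv_def)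
    show "local_inv \<delta> s0 h c tm lg ?l" by (simp add: local_inv_def)
  qed (simp_all add: inv(7))
qed

lemma U_inv_line14:
  assumes I: "U_inv \<delta> s0 h c tm lg" and pc: "pc_of c p = 14"
  shows "U_inv \<delta> s0 (h @ [Res p (snd (cH c p))]) (updL c p (\<lambda>l. l\<lparr>l_pc := 0\<rparr>)) tm lg"
proof -
  let ?l' = "(cL c p)\<lparr>l_pc := 0\<rparr>" let ?h = "h @ [Res p (snd (cH c p))]"
  note inv = U_invD[OF I]
  have odd: "odd (length (proj p h))" using inv(2)[of p] pc by (auto simp: pc_inv_def)
  obtain a where a: "pending h a" "h!a = Inv p (l_op (cL c p))" "tm (ticket_of c p) = a"
    using inv(2)[of p] pc by (auto simp: pc_inv_def)
  obtain E where E: "E \<in> set lg" "e_time E = ticket_of c p" "cH c p = (ticket_of c p, Resp (e_resp E))"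
    using inv(5)[of p] pc by (auto simp: H_inv_def)
  have "e_bound E \<le> length h" using inv(4) E(1) by (simp add: log_inv_def)
  then have "hist_inv ?h tm lg" using hist_inv_snoc_Res[OF inv(3) odd a(1) _ E(1)] a E by simp
  moreover have "\<forall>a. pending ?h a \<longrightarrow> ev_proc (?h!a) \<noteq> p"
    by (auto simp: pending_snoc nth_append pending_def)
  then have "pc_inv ?h c tm p ?l'" using odd unfolding pc_inv_def by (auto simp: proj_single)
  moreover have "H_inv h c tm lg p (cH c p) ?l'" using E by (auto simp: H_inv_def)
  ultimately have "U_inv \<delta> s0 ?h (updL c p (\<lambda>_. ?l')) tm lg"
    using U_inv_event_step[OF I] pc by (simp add: local_inv_def)
  then show ?thesis by (simp add: updL_def)
qed

lemma U_inv_step: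
  assumes I: "U_inv \<delta> s0 h c tm lg" and st: "ustep \<delta> c p e c'"
  shows "\<exists>tm' lg'. U_inv \<delta> s0 (h @ (case e of None \<Rightarrow> [] | Some x \<Rightarrow> [x])) c' tm' lg'"
  using st
proof (cases rule: ustep.cases)
  case (line1 oo)
  then show ?thesis using U_inv_line1[OF I] by (intro exI[of _ tm] exI[of _ lg]) (clarsimp simp: A_read_def split del: if_split)
next
  case line2
  then show ?thesis using U_inv_line2[OF I] by simp blast
next
  case line3
  then show ?thesis using U_inv_line3[OF I] by (intro exI[of _ tm] exI[of _ lg]) (clarsimp simp: A_read_def split del: if_split)
next
  case line4
  then show ?thesis using U_inv_line4[OF I] by (intro exI[of _ tm] exI[of _ lg]) (clarsimp simp: A_read_def split del: if_split)
next
  case (line5 t s r x)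
  then show ?thesis using U_inv_line5[OF I] by (intro exI[of _ tm] exI[of _ lg]) (clarsimp simp: A_read_def split del: if_split)
next
  case (line6 l)
  then show ?thesis using U_inv_line6[OF I] by (intro exI[of _ tm] exI[of _ lg]) (clarsimp simp: A_read_def split del: if_split)
next
  case (line7 l)
  then show ?thesis using U_inv_line7[OF I] by (intro exI[of _ tm] exI[of _ lg]) (clarsimp simp: A_read_def split del: if_split)
next
  case (line8 t oo x)
  then show ?thesis using U_inv_line8[OF I] by (intro exI[of _ tm] exI[of _ lg]) (clarsimp simp: A_read_def split del: if_split)
next
  case line9_10
  then show ?thesis using U_inv_line9[OF I] by (intro exI[of _ tm] exI[of _ lg]) (clarsimp simp: A_read_def split del: if_split)
next
  case (line11 oo s' r')
  then show ?thesis using U_inv_line11[OF I] by (intro exI[of _ tm] exI[of _ lg]) (clarsimp simp: A_read_def split del: if_split)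
next
  case (line12 l)
  then show ?thesis using U_inv_line12[OF I] by (clarsimp split del: if_split) blast
next
  case (line13 l)
  then show ?thesis using U_inv_line13[OF I] by (intro exI[of _ tm] exI[of _ lg]) (clarsimp simp: A_read_def split del: if_split)
next
  case line14
  then show ?thesis using U_inv_line14[OF I] by (intro exI[of _ tm] exI[of _ lg]) (clarsimp simp: A_read_def split del: if_split)
qed

lemma history_snoc: "history (tr @ [e]) = history tr @ (case e of None \<Rightarrow> [] | Some x \<Rightarrow> [x])"
  by (cases e) (simp_all add: history_def map_filter_def)

lemma U_inv_reachable: "uexec \<delta> c0 tr c \<Longrightarrow> init_conf s0 c0 \<Longrightarrow> \<exists>tm lg. U_inv \<delta> s0 (history tr) c tm lg"
proof (induction rule: uexec.induct)
  case (nil c)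
  thus ?case using U_inv_init[of s0 c] by (auto simp: history_def map_filter_def)
next
  case (snoc c0 tr c p e c')
  then obtain tm lg where "U_inv \<delta> s0 (history tr) c tm lg" by blast
  thus ?case using U_inv_step[OF _ snoc.hyps(2)] history_snoc by metis
qed

lemma U_inv_log_linearizable:
  assumes I: "U_inv \<delta> s0 h c tm lg"
  shows "log_linearizable h (map (tm \<circ> e_time) lg) (map e_bound lg) (map e_resp lg)
           (s0 # map e_state lg) \<delta> s0"
proof -
  note inv = U_invD[OF I]
  have L: "\<And>e. e \<in> set lg \<Longrightarrow> issued c (e_time e) \<and> tm (e_time e) < e_bound e \<and> e_bound e \<le> length h"
    and dist: "distinct (map e_time lg)"
    and mono: "\<forall>i j. i \<le> j \<longrightarrow> j < length lg \<longrightarrow> e_bound (lg!i) \<le> e_bound (lg!j)"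
    and steps: "\<forall>i<length lg. (log_state s0 lg i, ticket_op h tm (e_time (lg!i)), e_state (lg!i), e_resp (lg!i)) \<in> \<delta>"
    using inv(4) unfolding log_inv_def by blast+
  have T: "\<And>t. issued c t \<Longrightarrow> tm t < length h \<and> is_inv (h ! tm t)" "inj_on tm {t. issued c t}"
    using inv(1) unfolding ticket_inv_def by blast+
  have H: "wf_hist h"
    "\<And>a b. matching h a b \<Longrightarrow> \<exists>e\<in>set lg. tm (e_time e) = a \<and> e_bound e \<le> b \<and> res_val (h!b) = Resp (e_resp e)"
    using inv(3) unfolding hist_inv_def by blast+
  have "inj_on tm (set (map e_time lg))" using T(2) L by (auto intro: inj_on_subset)
  then have "distinct (map (tm \<circ> e_time) lg)" using dist by (simp add: distinct_map comp_inj_on)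
  moreover have "(s0 # map e_state lg) ! i = log_state s0 lg i" if "i < length lg" for i
    using that by (cases i) (simp_all add: log_state_def)
  moreover have "\<exists>i<length lg. map (tm \<circ> e_time) lg ! i = a \<and> map e_bound lg ! i \<le> b
      \<and> res_val (h!b) = Resp (map e_resp lg ! i)" if "matching h a b" for a b
    using H(2)[OF that] by (force simp: in_set_conv_nth)
  ultimately show ?thesis
    using H(1) L T(1) mono steps by unfold_locales (auto simp: ticket_op_def)
qed

theorem mainTheorem2:
  fixes \<delta> :: "('s \<times> 'o \<times> 's \<times> 'r) set" and s0 :: 's
    and c0 c :: "('p,'o,'r,'s) conf" and tr :: "('p,'o,'r) event option list"
  assumes "init_conf s0 c0"
    and "uexec \<delta> c0 tr c"
  shows "\<exists>h' pt. is_completion (history tr) h' \<and> linearization h' pt \<and> conforms \<delta> s0 h' pt"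
proof -
  obtain tm lg where "U_inv \<delta> s0 (history tr) c tm lg"
    using U_inv_reachable[OF assms(2) assms(1)] by blast
  then show ?thesis
    by (rule log_linearizable.completion_linearizable[OF U_inv_log_linearizable])
qed

end
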